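(* Let $(\Omega,\mathcal{F},P)$ be a complete probability space with a filtration $\mathbb{F}=(\mathcal{F}_t)_{t\ge0}$ satisfying the usual hypotheses, with $\mathcal{F}\supseteq\mathcal{F}_\infty:=\bigvee_{t\ge0}\mathcal{F}_t$, and let $\tau$ be a positive random variable. Let $\mathbb{G}=(\mathcal{G}_t)_{t\ge 0}$ be the progressive expansion of $\mathbb{F}$ by $\tau$ and $\mathbb{G}'=(\mathcal{G}'_t)_{t\ge0}$ the minimal expansion of $\mathbb{F}$ by $\tau$. Then the compensator of $\tau$ (i.e. of $N_t=1_{\{\tau\le t\}}$) under $\mathbb{G}$ and the compensator of $\tau$ under $\mathbb{G}'$ are identical.
   Context: The progressive expansion is $\mathcal{G}_t:=\{B\in\mathcal{G}_\infty:\exists B_t\in\mathcal{F}_t,\ B\cap\{t<\tau\}=B_t\cap\{t<\tau\}\}$ where $\mathcal{G}_\infty=\mathcal{F}_\infty\vee\sigma(\tau)$. The minimal expansion is $\mathcal{G}'_t:=\mathcal{F}_t\vee\sigma(\tau\wedge t)=\mathcal{F}_t\vee\sigma(\{\tau\le s\}: s\le t)$. The compensator of $\tau$ under a filtration $\mathbb{H}$ for which $\tau$ is a stopping time is the $\mathbb{H}$-predictable increasing process $\tilde N$ with $\tilde N_0=0$ such that $1_{\{\tau\le t\}}-\tilde N_t$ is an $\mathbb{H}$-martingale. *)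

theory Defs
  imports "HOL-Probability.Probability"
begin

definition filtration_on :: "'a measure \<Rightarrow> (real \<Rightarrow> 'a set set) \<Rightarrow> bool" where
  "filtration_on M F \<longleftrightarrow>
     (\<forall>t\<ge>0. sigma_algebra (space M) (F t) \<and> F t \<subseteq> sets M) \<and>
     (\<forall>s t. 0 \<le> s \<and> s \<le> t \<longrightarrow> F s \<subseteq> F t)"

definition usual_hypotheses :: "'a measure \<Rightarrow> (real \<Rightarrow> 'a set set) \<Rightarrow> bool" where
  "usual_hypotheses M F \<longleftrightarrow>
     (\<forall>t\<ge>0. F t = (\<Inter>u\<in>{t<..}. F u)) \<and> null_sets M \<subseteq> F 0"

definition F_infty :: "'a measure \<Rightarrow> (real \<Rightarrow> 'a set set) \<Rightarrow> 'a set set" where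
  "F_infty M F = sigma_sets (space M) (\<Union>t\<in>{0..}. F t)"

definition G_infty :: "'a measure \<Rightarrow> (real \<Rightarrow> 'a set set) \<Rightarrow> ('a \<Rightarrow> real) \<Rightarrow> 'a set set" where
  "G_infty M F \<tau> = sigma_sets (space M)
     (F_infty M F \<union> {{\<omega>\<in>space M. \<tau> \<omega> \<le> s} | s. True})"

definition prog_exp :: "'a measure \<Rightarrow> (real \<Rightarrow> 'a set set) \<Rightarrow> ('a \<Rightarrow> real) \<Rightarrow> real \<Rightarrow> 'a set set" where
  "prog_exp M F \<tau> t = {B \<in> G_infty M F \<tau>. \<exists>Bt\<in>F t.
      B \<inter> {\<omega>\<in>space M. t < \<tau> \<omega>} = Bt \<inter> {\<omega>\<in>space M. t < \<tau> \<omega>}}"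

definition min_exp :: "'a measure \<Rightarrow> (real \<Rightarrow> 'a set set) \<Rightarrow> ('a \<Rightarrow> real) \<Rightarrow> real \<Rightarrow> 'a set set" where
  "min_exp M F \<tau> t = sigma_sets (space M)
     (F t \<union> {{\<omega>\<in>space M. \<tau> \<omega> \<le> s} | s. s \<le> t})"

definition adapted :: "'a measure \<Rightarrow> (real \<Rightarrow> 'a set set) \<Rightarrow> (real \<Rightarrow> 'a \<Rightarrow> real) \<Rightarrow> bool" where
  "adapted M H X \<longleftrightarrow> (\<forall>t\<ge>0. \<forall>B\<in>sets borel. X t -` B \<inter> space M \<in> H t)"

definition martingale :: "'a measure \<Rightarrow> (real \<Rightarrow> 'a set set) \<Rightarrow> (real \<Rightarrow> 'a \<Rightarrow> real) \<Rightarrow> bool" where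
  "martingale M H X \<longleftrightarrow> adapted M H X \<and> (\<forall>t\<ge>0. integrable M (X t)) \<and>
     (\<forall>s t A. 0 \<le> s \<and> s \<le> t \<and> A \<in> H s \<longrightarrow>
        (LINT \<omega>:A|M. X t \<omega>) = (LINT \<omega>:A|M. X s \<omega>))"

definition predictable_sets :: "'a measure \<Rightarrow> (real \<Rightarrow> 'a set set) \<Rightarrow> ('a \<times> real) set set" where
  "predictable_sets M H = sigma_sets (space M \<times> {0..})
     ({A \<times> {0} | A. A \<in> H 0} \<union> {A \<times> {s<..t} | A s t. 0 \<le> s \<and> s < t \<and> A \<in> H s})"

definition predictable :: "'a measure \<Rightarrow> (real \<Rightarrow> 'a set set) \<Rightarrow> (real \<Rightarrow> 'a \<Rightarrow> real) \<Rightarrow> bool" where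
  "predictable M H X \<longleftrightarrow> (\<forall>B\<in>sets borel.
     {(\<omega>, t). \<omega> \<in> space M \<and> 0 \<le> t \<and> X t \<omega> \<in> B} \<in> predictable_sets M H)"

definition compensator :: "'a measure \<Rightarrow> (real \<Rightarrow> 'a set set) \<Rightarrow> ('a \<Rightarrow> real) \<Rightarrow> (real \<Rightarrow> 'a \<Rightarrow> real) \<Rightarrow> bool" where
  "compensator M H \<tau> A \<longleftrightarrow> predictable M H A \<and>
     (\<forall>\<omega>\<in>space M. A 0 \<omega> = 0 \<and> mono_on {0..} (\<lambda>t. A t \<omega>) \<and>
        (\<forall>t\<ge>0. continuous (at_right t) (\<lambda>s. A s \<omega>))) \<and>
     martingale M H (\<lambda>t \<omega>. indicator {\<omega>'. \<tau> \<omega>' \<le> t} \<omega> - A t \<omega>)"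

end

theory Submission
  imports Defs
begin

text \<open>The compensator \<open>A'\<close> of \<open>\<tau>\<close> for the minimal expansion is also predictable for the
  progressive expansion, which is the larger filtration. It does not increase after \<open>\<tau>\<close>: the
  predictable set \<open>]]\<tau>,\<infinity>[[\<close> carries no mass of the Dol\'eans measure of \<open>N\<close>, hence none of
  the Dol\'eans measure of \<open>A'\<close>. Since the two expansions have the same traces on \<open>{s < \<tau>}\<close>
  at time \<open>s\<close>, it follows that \<open>N - A'\<close> is a martingale for the progressive expansion too.
  So \<open>A\<close> and \<open>A'\<close> are predictable integrable increasing processes with the same conditional
  increments, and such processes agree: their Dol\'eans measures on the predictable
  \<open>\<sigma>\<close>-algebra coincide, and integrating the predictable function \<open>clip (A - A')\<close> against
  both, the convexity of the Huber function, whose derivative is \<open>clip\<close>, forces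
  \<open>A\<^sub>T = A'\<^sub>T\<close> almost surely.\<close>

section \<open>Right-continuous increasing paths\<close>

definition hitting_time :: "(real \<Rightarrow> real) \<Rightarrow> real \<Rightarrow> real \<Rightarrow> real" where
  "hitting_time f T u = (if u \<le> f T then Inf {s\<in>{0..T}. u \<le> f s} else T)"

lemma hitting_time_attained:
  fixes f :: "real \<Rightarrow> real"
  assumes rc: "\<forall>t\<ge>0. continuous (at_right t) f" and T: "0 \<le> T" and uT: "u \<le> f T"
  shows "Inf {s\<in>{0..T}. u \<le> f s} \<in> {s\<in>{0..T}. u \<le> f s}"
proof -
  let ?S = "{s\<in>{0..T}. u \<le> f s}"
  define m where "m = Inf ?S"
  have ne: "?S \<noteq> {}" using T uT by auto
  have bdd: "bdd_below ?S" by (auto intro!: bdd_belowI[of _ 0])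
  have m0: "0 \<le> m" unfolding m_def using ne by (auto intro!: cInf_greatest)
  have mT: "m \<le> T" unfolding m_def using T uT bdd by (auto intro!: cInf_lower)
  have "u \<le> f m"
  proof (rule ccontr)
    assume "\<not> u \<le> f m"
    hence lt: "f m < u" by simp
    have "(f \<longlongrightarrow> f m) (at_right m)" using rc m0 by (simp add: continuous_within)
    hence "eventually (\<lambda>s. f s < u) (at_right m)" using lt by (rule order_tendstoD)
    then obtain b where b: "m < b" "\<And>s. m < s \<Longrightarrow> s < b \<Longrightarrow> f s < u"
      by (auto simp: eventually_at_right_field)
    then obtain s where s: "s \<in> ?S" "s < b" unfolding m_def using ne bdd
      by (meson cInf_lessD)
    have "m \<le> s" unfolding m_def using s bdd by (auto intro!: cInf_lower)
    then show False using s lt b(2)[of s] by (cases "s = m") auto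
  qed
  thus ?thesis using m0 mT unfolding m_def by auto
qed

lemma hitting_time_le_iff:
  fixes f :: "real \<Rightarrow> real"
  assumes mono: "mono_on {0..} f" and rc: "\<forall>t\<ge>0. continuous (at_right t) f" and T: "0 \<le> T"
  shows "hitting_time f T u \<le> t \<longleftrightarrow> T \<le> t \<or> (0 \<le> t \<and> u \<le> f t)"
proof (cases "u \<le> f T")
  case True
  let ?S = "{s\<in>{0..T}. u \<le> f s}"
  have bdd: "bdd_below ?S" by (auto intro!: bdd_belowI[of _ 0])
  have mem: "Inf ?S \<in> ?S" by (rule hitting_time_attained[OF rc T True])
  have r: "hitting_time f T u = Inf ?S" using True by (simp add: hitting_time_def)
  show ?thesis
  proof
    assume le: "hitting_time f T u \<le> t"
    show "T \<le> t \<or> (0 \<le> t \<and> u \<le> f t)"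
    proof (cases "T \<le> t")
      case False
      hence "u \<le> f (Inf ?S)" "f (Inf ?S) \<le> f t" "0 \<le> t" using mem le r
        by (auto intro: mono_onD[OF mono])
      thus ?thesis by auto
    qed simp
  next
    assume "T \<le> t \<or> (0 \<le> t \<and> u \<le> f t)"
    then consider "T \<le> t" | "0 \<le> t" "t \<le> T" "u \<le> f t" by linarith
    then show "hitting_time f T u \<le> t"
    proof cases
      case 1 then show ?thesis using mem r by auto
    next
      case 2 then show ?thesis using r bdd by (auto intro!: cInf_lower)
    qed
  qed
next
  case False
  hence r: "hitting_time f T u = T" by (simp add: hitting_time_def)
  have "\<not> (0 \<le> t \<and> t < T \<and> u \<le> f t)"
    using False mono_onD[OF mono, of t T] by auto
  thus ?thesis using r by auto
qed

lemma hitting_time_nonneg: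
  fixes f :: "real \<Rightarrow> real"
  assumes rc: "\<forall>t\<ge>0. continuous (at_right t) f" and T: "0 \<le> T"
  shows "0 \<le> hitting_time f T u"
  using hitting_time_attained[OF rc T] T by (simp add: hitting_time_def)

lemma right_continuous_tendsto_from_above:
  fixes g :: "real \<Rightarrow> real"
  assumes g: "continuous (at_right r) g" and a: "\<And>n. r \<le> a n" "a \<longlonglongrightarrow> r"
  shows "(\<lambda>n. g (a n)) \<longlonglongrightarrow> g r"
proof -
  have "{r..} - {r} = {r<..} - {r}" by auto
  hence "at r within {r..} = at_right r" unfolding at_within_def by metis
  hence "continuous (at r within {r..}) g" using g by simp
  moreover have "a n \<in> {r..}" for n using a(1)[of n] by simp
  ultimately show ?thesis using a(2) by (rule continuous_within_tendsto_compose')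
qed

lemma tendsto_squeeze_from_above:
  fixes a :: "nat \<Rightarrow> real"
  assumes "\<And>n. r \<le> a n" "\<And>n. a n < r + c / real (Suc n)"
  shows "a \<longlonglongrightarrow> r"
proof (rule tendsto_sandwich[of "\<lambda>_. r" a sequentially "\<lambda>n. r + c / real (Suc n)"])
  show "\<forall>\<^sub>F n in sequentially. r \<le> a n" using assms(1) by simp
  show "\<forall>\<^sub>F n in sequentially. a n \<le> r + c / real (Suc n)" using assms(2) by (simp add: less_imp_le)
  have "(\<lambda>n. c / real (Suc n)) \<longlonglongrightarrow> 0"
    using lim_const_over_n[of c] LIMSEQ_Suc by blast
  from tendsto_add[OF tendsto_const this, of r]
  show "(\<lambda>n. r + c / real (Suc n)) \<longlonglongrightarrow> r" by simp
qed simp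

lemma AE_all_eq_if_right_continuous:
  fixes X Y :: "real \<Rightarrow> 'a \<Rightarrow> real"
  assumes eq: "\<And>t. 0 \<le> t \<Longrightarrow> AE \<omega> in M. X t \<omega> = Y t \<omega>"
    and rcX: "\<And>\<omega> t. \<omega> \<in> space M \<Longrightarrow> 0 \<le> t \<Longrightarrow> continuous (at_right t) (\<lambda>s. X s \<omega>)"
    and rcY: "\<And>\<omega> t. \<omega> \<in> space M \<Longrightarrow> 0 \<le> t \<Longrightarrow> continuous (at_right t) (\<lambda>s. Y s \<omega>)"
  shows "AE \<omega> in M. \<forall>t\<ge>0. X t \<omega> = Y t \<omega>"
proof -
  let ?Q = "{q \<in> \<rat>. 0 \<le> q}"
  have "countable ?Q" by (rule countable_subset[OF _ countable_rat]) auto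
  hence "AE \<omega> in M. \<forall>q\<in>?Q. X q \<omega> = Y q \<omega>"
    by (intro AE_ball_countable') (use eq in auto)
  thus ?thesis
  proof (rule AE_mp[OF _ AE_I2], intro impI allI)
    fix \<omega> and t :: real
    assume w: "\<omega> \<in> space M" and onQ: "\<forall>q\<in>?Q. X q \<omega> = Y q \<omega>" and t: "0 \<le> t"
    have "\<exists>q\<in>\<rat>. t < q \<and> q < t + 1 / real (Suc n)" for n
      by (rule Rats_dense_in_real) simp
    then obtain a where a: "\<And>n. a n \<in> \<rat>" "\<And>n. t < a n" "\<And>n. a n < t + 1 / real (Suc n)"
      by metis
    have ge: "t \<le> a n" for n using a(2)[of n] by simp
    have lim: "a \<longlonglongrightarrow> t" using ge a(3) by (rule tendsto_squeeze_from_above)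
    have "X (a n) \<omega> = Y (a n) \<omega>" for n
    proof -
      have "a n \<in> ?Q" using a(1)[of n] ge[of n] t by simp
      thus ?thesis using onQ by blast
    qed
    moreover have "(\<lambda>n. X (a n) \<omega>) \<longlonglongrightarrow> X t \<omega>"
      by (rule right_continuous_tendsto_from_above[OF rcX[OF w t] ge lim])
    ultimately have "(\<lambda>n. Y (a n) \<omega>) \<longlonglongrightarrow> X t \<omega>" by simp
    moreover have "(\<lambda>n. Y (a n) \<omega>) \<longlonglongrightarrow> Y t \<omega>"
      by (rule right_continuous_tendsto_from_above[OF rcY[OF w t] ge lim])
    ultimately show "X t \<omega> = Y t \<omega>" by (rule LIMSEQ_unique)
  qed
qed

section \<open>The Dol\'eans measure of an integrable increasing process\<close>

lemma emeasure_pair_lborel_between: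
  fixes M :: "'a measure" and a b :: "'a \<Rightarrow> real"
  assumes [measurable]: "a \<in> borel_measurable M" "b \<in> borel_measurable M" "P \<in> sets M"
    and ab: "\<And>\<omega>. \<omega> \<in> space M \<Longrightarrow> a \<omega> \<le> b \<omega>"
  shows "emeasure (M \<Otimes>\<^sub>M lborel)
      {x \<in> space (M \<Otimes>\<^sub>M lborel). fst x \<in> P \<and> a (fst x) < snd x \<and> snd x \<le> b (fst x)}
    = (\<integral>\<^sup>+\<omega>. indicator P \<omega> * ennreal (b \<omega> - a \<omega>) \<partial>M)"
proof -
  let ?S = "{x \<in> space (M \<Otimes>\<^sub>M lborel). fst x \<in> P \<and> a (fst x) < snd x \<and> snd x \<le> b (fst x)}"
  have S: "?S \<in> sets (M \<Otimes>\<^sub>M lborel)" by measurable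
  have "emeasure (M \<Otimes>\<^sub>M lborel) ?S = (\<integral>\<^sup>+\<omega>. emeasure lborel (Pair \<omega> -` ?S) \<partial>M)"
    by (rule lborel.emeasure_pair_measure_alt[OF S])
  also have "\<dots> = (\<integral>\<^sup>+\<omega>. indicator P \<omega> * ennreal (b \<omega> - a \<omega>) \<partial>M)"
  proof (rule nn_integral_cong)
    fix \<omega> assume w: "\<omega> \<in> space M"
    have "Pair \<omega> -` ?S = (if \<omega> \<in> P then {a \<omega><..b \<omega>} else {})"
      using w by (auto simp: space_pair_measure)
    thus "emeasure lborel (Pair \<omega> -` ?S) = indicator P \<omega> * ennreal (b \<omega> - a \<omega>)"
      using ab[OF w] by simp
  qed
  finally show ?thesis .
qed

lemma integral_pair_lborel_between:
  fixes M :: "'a measure" and a b c :: "'a \<Rightarrow> real"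
  assumes M: "sigma_finite_measure M"
    and [measurable]: "a \<in> borel_measurable M" "b \<in> borel_measurable M" "c \<in> borel_measurable M"
    and ia: "integrable M a" and ib: "integrable M b"
    and ab: "\<And>\<omega>. \<omega> \<in> space M \<Longrightarrow> a \<omega> \<le> b \<omega>"
    and cb: "\<And>\<omega>. \<omega> \<in> space M \<Longrightarrow> \<bar>c \<omega>\<bar> \<le> 1"
  defines "f \<equiv> \<lambda>x. c (fst x) * indicator {x. a (fst x) < snd x \<and> snd x \<le> b (fst x)} x"
  shows "integrable (M \<Otimes>\<^sub>M lborel) f"
    and "(\<integral>x. f x \<partial>(M \<Otimes>\<^sub>M lborel)) = (\<integral>\<omega>. c \<omega> * (b \<omega> - a \<omega>) \<partial>M)"
proof -
  interpret sigma_finite_measure M by fact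
  interpret P: pair_sigma_finite M lborel ..
  let ?S = "{x \<in> space (M \<Otimes>\<^sub>M lborel). fst x \<in> space M \<and> a (fst x) < snd x \<and> snd x \<le> b (fst x)}"
  have S: "?S \<in> sets (M \<Otimes>\<^sub>M lborel)" by measurable
  have "emeasure (M \<Otimes>\<^sub>M lborel) ?S = (\<integral>\<^sup>+\<omega>. ennreal (b \<omega> - a \<omega>) \<partial>M)"
    by (subst emeasure_pair_lborel_between) (auto simp: ab intro!: nn_integral_cong)
  also have "\<dots> = ennreal (\<integral>\<omega>. (b \<omega> - a \<omega>) \<partial>M)"
    using ia ib ab by (intro nn_integral_eq_integral) auto
  finally have "integrable (M \<Otimes>\<^sub>M lborel) (indicator ?S :: _ \<Rightarrow> real)"
    using S by (intro integrable_indicator_iff[THEN iffD2]) auto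
  then show int: "integrable (M \<Otimes>\<^sub>M lborel) f"
  proof (rule Bochner_Integration.integrable_bound)
    show "f \<in> borel_measurable (M \<Otimes>\<^sub>M lborel)" unfolding f_def by measurable
    show "AE x in M \<Otimes>\<^sub>M lborel. norm (f x) \<le> norm (indicator ?S x :: real)"
      using cb by (intro AE_I2) (auto simp: f_def space_pair_measure indicator_def)
  qed
  have "integral\<^sup>L (M \<Otimes>\<^sub>M lborel) f = (\<integral>\<omega>. (\<integral>u. f (\<omega>, u) \<partial>lborel) \<partial>M)"
    using P.integral_fst'[OF int] by simp
  also have "\<dots> = (\<integral>\<omega>. c \<omega> * (b \<omega> - a \<omega>) \<partial>M)"
  proof (rule Bochner_Integration.integral_cong[OF refl])
    fix \<omega> assume w: "\<omega> \<in> space M"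
    have "(\<integral>u. f (\<omega>, u) \<partial>lborel) = (\<integral>u. c \<omega> * indicator {a \<omega><..b \<omega>} u \<partial>lborel)"
      by (intro Bochner_Integration.integral_cong) (auto simp: f_def indicator_def)
    also have "\<dots> = c \<omega> * (b \<omega> - a \<omega>)" using ab[OF w] by simp
    finally show "(\<integral>u. f (\<omega>, u) \<partial>lborel) = c \<omega> * (b \<omega> - a \<omega>)" .
  qed
  finally show "integral\<^sup>L (M \<Otimes>\<^sub>M lborel) f = (\<integral>\<omega>. c \<omega> * (b \<omega> - a \<omega>) \<partial>M)" .
qed

definition integrable_increasing :: "'a measure \<Rightarrow> (real \<Rightarrow> 'a \<Rightarrow> real) \<Rightarrow> bool" where
  "integrable_increasing M X \<longleftrightarrow>
     (\<forall>\<omega>\<in>space M. X 0 \<omega> = 0 \<and> mono_on {0..} (\<lambda>t. X t \<omega>) \<and>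
        (\<forall>t\<ge>0. continuous (at_right t) (\<lambda>s. X s \<omega>))) \<and>
     (\<forall>t\<ge>0. integrable M (X t))"

lemma integrable_increasingD:
  assumes "integrable_increasing M X"
  shows "\<And>\<omega>. \<omega> \<in> space M \<Longrightarrow> X 0 \<omega> = 0"
    and "\<And>\<omega>. \<omega> \<in> space M \<Longrightarrow> mono_on {0..} (\<lambda>t. X t \<omega>)"
    and "\<And>\<omega> t. \<omega> \<in> space M \<Longrightarrow> 0 \<le> t \<Longrightarrow> continuous (at_right t) (\<lambda>s. X s \<omega>)"
    and "\<And>t. 0 \<le> t \<Longrightarrow> integrable M (X t)"
    and "\<And>t. 0 \<le> t \<Longrightarrow> X t \<in> borel_measurable M"
  using assms unfolding integrable_increasing_def by auto

lemma integrable_increasing_mono: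
  assumes "integrable_increasing M X" "\<omega> \<in> space M" "0 \<le> s" "s \<le> t"
  shows "X s \<omega> \<le> X t \<omega>"
  using integrable_increasingD(2)[OF assms(1,2)] assms(3,4) by (auto intro: mono_onD)

lemma integrable_increasing_nonneg:
  assumes "integrable_increasing M X" "\<omega> \<in> space M" "0 \<le> t"
  shows "0 \<le> X t \<omega>"
  using integrable_increasing_mono[OF assms(1,2) order_refl assms(3)]
    integrable_increasingD(1)[OF assms(1,2)] by simp

lemma integrable_increasing_hitting_time_le_iff:
  assumes "integrable_increasing M X" "\<omega> \<in> space M" "0 \<le> T"
  shows "hitting_time (\<lambda>s. X s \<omega>) T u \<le> t \<longleftrightarrow> T \<le> t \<or> (0 \<le> t \<and> u \<le> X t \<omega>)"
  using integrable_increasingD(3)[OF assms(1,2)]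
  by (intro hitting_time_le_iff integrable_increasingD(2)[OF assms(1,2)] assms(3)) blast

lemma integrable_increasing_hitting_time_nonneg:
  assumes "integrable_increasing M X" "\<omega> \<in> space M" "0 \<le> T"
  shows "0 \<le> hitting_time (\<lambda>s. X s \<omega>) T u"
  using integrable_increasingD(3)[OF assms(1,2)] by (intro hitting_time_nonneg assms(3)) blast

definition subgraph :: "'a measure \<Rightarrow> (real \<Rightarrow> 'a \<Rightarrow> real) \<Rightarrow> real \<Rightarrow> ('a \<times> real) set" where
  "subgraph M X T = {x \<in> space (M \<Otimes>\<^sub>M lborel). 0 < snd x \<and> snd x \<le> X T (fst x)}"

definition time_change :: "(real \<Rightarrow> 'a \<Rightarrow> real) \<Rightarrow> real \<Rightarrow> 'a \<times> real \<Rightarrow> 'a \<times> real" where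
  "time_change X T x = (fst x, hitting_time (\<lambda>s. X s (fst x)) T (snd x))"

lemma subgraph_sets:
  assumes X: "integrable_increasing M X" and T: "0 \<le> T"
  shows "subgraph M X T \<in> sets (M \<Otimes>\<^sub>M lborel)"
proof -
  have [measurable]: "X T \<in> borel_measurable M" using integrable_increasingD(5)[OF X T] .
  show ?thesis unfolding subgraph_def by measurable
qed

lemma integrable_indicator_subgraph:
  assumes X: "integrable_increasing M X" and T: "0 \<le> T"
  shows "integrable (M \<Otimes>\<^sub>M lborel) (indicator (subgraph M X T) :: _ \<Rightarrow> real)"
proof -
  have [measurable]: "X T \<in> borel_measurable M" using integrable_increasingD(5)[OF X T] .
  have "subgraph M X T = {x \<in> space (M \<Otimes>\<^sub>M lborel).
      fst x \<in> space M \<and> (\<lambda>_. 0) (fst x) < snd x \<and> snd x \<le> X T (fst x)}"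
    by (auto simp: subgraph_def space_pair_measure)
  also have "emeasure (M \<Otimes>\<^sub>M lborel) \<dots> = (\<integral>\<^sup>+\<omega>. indicator (space M) \<omega> * ennreal (X T \<omega> - 0) \<partial>M)"
    using integrable_increasing_nonneg[OF X _ T] by (intro emeasure_pair_lborel_between) auto
  also have "\<dots> = (\<integral>\<^sup>+\<omega>. ennreal (X T \<omega>) \<partial>M)"
    by (intro nn_integral_cong) simp
  also have "\<dots> = ennreal (\<integral>\<omega>. X T \<omega> \<partial>M)"
    using integrable_increasingD(4)[OF X T] integrable_increasing_nonneg[OF X _ T]
    by (intro nn_integral_eq_integral) auto
  finally show ?thesis
    using subgraph_sets[OF X T] by (intro integrable_indicator_iff[THEN iffD2]) auto
qed

definition predictable_rectangles :: "'a measure \<Rightarrow> (real \<Rightarrow> 'a set set) \<Rightarrow> ('a \<times> real) set set" where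
  "predictable_rectangles M H =
     {A \<times> {0} | A. A \<in> H 0} \<union> {A \<times> {s<..t} | A s t. 0 \<le> s \<and> s < t \<and> A \<in> H s}"

definition predictable_sigma :: "'a measure \<Rightarrow> (real \<Rightarrow> 'a set set) \<Rightarrow> ('a \<times> real) measure" where
  "predictable_sigma M H = sigma (space M \<times> {0..}) (predictable_rectangles M H)"

text \<open>The Dol\'eans measure of \<open>X\<close> stopped at \<open>T\<close>, i.e. the measure
  \<open>A \<times> ]s,t] \<mapsto> E[1\<^sub>A (X\<^sub>t\<^sub>\<and>\<^sub>T - X\<^sub>s\<^sub>\<and>\<^sub>T)]\<close> on the predictable \<open>\<sigma>\<close>-algebra,
  obtained as the image of Lebesgue measure on the region under the graph of \<open>X\<^sub>T\<close>
  by the right-continuous inverse of \<open>X\<close>.\<close>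
definition doleans :: "'a measure \<Rightarrow> (real \<Rightarrow> 'a set set) \<Rightarrow> (real \<Rightarrow> 'a \<Rightarrow> real) \<Rightarrow> real \<Rightarrow> ('a \<times> real) measure" where
  "doleans M H X T =
     distr (density (M \<Otimes>\<^sub>M lborel) (indicator (subgraph M X T))) (predictable_sigma M H) (time_change X T)"

lemma predictable_rectangle_zeroI: "A \<in> H 0 \<Longrightarrow> A \<times> {0} \<in> predictable_rectangles M H"
  unfolding predictable_rectangles_def by blast

lemma predictable_rectangleI:
  "0 \<le> s \<Longrightarrow> s < t \<Longrightarrow> A \<in> H s \<Longrightarrow> A \<times> {s<..t} \<in> predictable_rectangles M H"
  unfolding predictable_rectangles_def by blast

lemma predictable_rectangles_cases [consumes 1, case_names zero interval]:
  assumes "G \<in> predictable_rectangles M H"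
  obtains (zero) A where "G = A \<times> {0}" "A \<in> H 0"
    | (interval) A s t where "G = A \<times> {s<..t}" "0 \<le> s" "s < t" "A \<in> H s"
  using assms unfolding predictable_rectangles_def by blast

lemma predictable_mono:
  assumes sub: "\<And>s. 0 \<le> s \<Longrightarrow> H1 s \<subseteq> H2 s" and X: "predictable M H1 X"
  shows "predictable M H2 X"
proof -
  have "predictable_sets M H1 \<subseteq> predictable_sets M H2"
    unfolding predictable_sets_def using sub by (intro sigma_sets_mono') blast
  thus ?thesis using X unfolding predictable_def by blast
qed

locale filtered_prob_space = prob_space M for M :: "'a measure" +
  fixes H :: "real \<Rightarrow> 'a set set"
  assumes filtration: "filtration_on M H"
begin

lemma sigma_algebra_H: "0 \<le> t \<Longrightarrow> sigma_algebra (space M) (H t)"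
  using filtration unfolding filtration_on_def by auto

lemma sets_H: "0 \<le> t \<Longrightarrow> H t \<subseteq> sets M"
  using filtration unfolding filtration_on_def by auto

lemma H_mono: "0 \<le> s \<Longrightarrow> s \<le> t \<Longrightarrow> H s \<subseteq> H t"
  using filtration unfolding filtration_on_def by auto

lemma
  assumes "0 \<le> t"
  shows H_Int: "A \<in> H t \<Longrightarrow> B \<in> H t \<Longrightarrow> A \<inter> B \<in> H t"
    and space_in_H: "space M \<in> H t"
    and empty_in_H: "{} \<in> H t"
proof -
  interpret sigma_algebra "space M" "H t" by (rule sigma_algebra_H[OF assms])
  show "A \<in> H t \<Longrightarrow> B \<in> H t \<Longrightarrow> A \<inter> B \<in> H t" "space M \<in> H t" "{} \<in> H t" by auto
qed

lemma predictable_rectangles_subset: "predictable_rectangles M H \<subseteq> Pow (space M \<times> {0..})"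
proof -
  have "A \<subseteq> space M" if "0 \<le> s" "A \<in> H s" for A s
    using sets_H[OF that(1)] that(2) sets.sets_into_space by blast
  then show ?thesis unfolding predictable_rectangles_def by fastforce
qed

lemma sets_predictable_sigma: "sets (predictable_sigma M H) = predictable_sets M H"
  unfolding predictable_sigma_def predictable_sets_def using predictable_rectangles_subset
  by (simp add: sets_measure_of predictable_rectangles_def)

lemma space_predictable_sigma: "space (predictable_sigma M H) = space M \<times> {0..}"
  unfolding predictable_sigma_def using predictable_rectangles_subset
  by (simp add: space_measure_of_conv)

lemma predictable_rectangle_sets:
  "G \<in> predictable_rectangles M H \<Longrightarrow> G \<in> sets (predictable_sigma M H)"
  using predictable_rectangles_subset unfolding predictable_sigma_def by (auto simp: sets_measure_of)

lemma predictable_path_measurable: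
  assumes "predictable M H X"
  shows "(\<lambda>x. X (snd x) (fst x)) \<in> borel_measurable (predictable_sigma M H)"
proof (rule measurableI)
  fix B :: "real set" assume B: "B \<in> sets borel"
  have "(\<lambda>x. X (snd x) (fst x)) -` B \<inter> space (predictable_sigma M H) =
      {(\<omega>, t). \<omega> \<in> space M \<and> 0 \<le> t \<and> X t \<omega> \<in> B}"
    by (auto simp: space_predictable_sigma)
  also have "\<dots> \<in> sets (predictable_sigma M H)"
    using assms B unfolding predictable_def sets_predictable_sigma by blast
  finally show "(\<lambda>x. X (snd x) (fst x)) -` B \<inter> space (predictable_sigma M H) \<in> sets (predictable_sigma M H)" .
qed simp

lemma Int_stable_predictable_rectangles: "Int_stable (predictable_rectangles M H)"
proof (rule Int_stableI)
  fix a b assume a: "a \<in> predictable_rectangles M H" and b: "b \<in> predictable_rectangles M H"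
  have empty: "{} \<in> predictable_rectangles M H"
    using predictable_rectangle_zeroI[of "{}" H M] empty_in_H[of 0] by simp
  show "a \<inter> b \<in> predictable_rectangles M H"
  using a proof (cases rule: predictable_rectangles_cases)
    case (zero A)
    show ?thesis
    using b proof (cases rule: predictable_rectangles_cases)
      case (zero B)
      then show ?thesis using \<open>a = A \<times> {0}\<close> \<open>A \<in> H 0\<close>
        by (auto simp: Times_Int_Times intro!: predictable_rectangle_zeroI H_Int)
    next
      case (interval B s t)
      then have "a \<inter> b = {}" using zero by auto
      then show ?thesis using empty by simp
    qed
  next
    case (interval A s t)
    show ?thesis
    using b proof (cases rule: predictable_rectangles_cases)
      case (zero B)
      then have "a \<inter> b = {}" using interval by auto
      then show ?thesis using empty by simp
    next
      case interval': (interval B s' t')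
      let ?r = "max s s'"
      show ?thesis
      proof (cases "?r < min t t'")
        case True
        have "A \<inter> B \<in> H ?r"
          using interval interval' H_mono[of s ?r] H_mono[of s' ?r] by (intro H_Int) auto
        moreover have "a \<inter> b = (A \<inter> B) \<times> {?r<..min t t'}" using interval interval' by auto
        ultimately show ?thesis using True interval by (auto intro: predictable_rectangleI)
      next
        case False
        then have "a \<inter> b = {}" using interval interval' by auto
        then show ?thesis using empty by simp
      qed
    qed
  qed
qed

end

lemma integrable_increasing_hitting_time_in_Ioc_iff:
  assumes X: "integrable_increasing M X" and w: "\<omega> \<in> space M" and T: "0 < T"
    and u: "u \<le> X T \<omega>" and st: "0 \<le> s" "s \<le> t"
  shows "s < hitting_time (\<lambda>r. X r \<omega>) T u \<and> hitting_time (\<lambda>r. X r \<omega>) T u \<le> t \<longleftrightarrow>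
    X (min s T) \<omega> < u \<and> u \<le> X (min t T) \<omega>"
  using integrable_increasing_hitting_time_le_iff[OF X w less_imp_le[OF T], of u s]
    integrable_increasing_hitting_time_le_iff[OF X w less_imp_le[OF T], of u t] u st
  by (auto simp: min_def)

lemma integrable_increasing_hitting_time_pos:
  assumes X: "integrable_increasing M X" and w: "\<omega> \<in> space M" and T: "0 < T" and u: "0 < u"
  shows "0 < hitting_time (\<lambda>r. X r \<omega>) T u"
  using integrable_increasing_hitting_time_le_iff[OF X w less_imp_le[OF T], of u 0]
    integrable_increasingD(1)[OF X w] T u by auto

lemma subgraph_inter_time_change_vimage:
  assumes X: "integrable_increasing M X" and T: "0 < T" and st: "0 \<le> s" "s < t"
  shows "subgraph M X T \<inter> (time_change X T -` (A \<times> {s<..t}) \<inter> space (M \<Otimes>\<^sub>M lborel)) =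
    {x \<in> space (M \<Otimes>\<^sub>M lborel). fst x \<in> A \<and> X (min s T) (fst x) < snd x \<and> snd x \<le> X (min t T) (fst x)}"
    (is "_ = {x \<in> ?\<Omega>. _}")
proof (rule set_eqI)
  fix x :: "'a \<times> real"
  show "x \<in> subgraph M X T \<inter> (time_change X T -` (A \<times> {s<..t}) \<inter> ?\<Omega>) \<longleftrightarrow>
    x \<in> {x \<in> ?\<Omega>. fst x \<in> A \<and> X (min s T) (fst x) < snd x \<and> snd x \<le> X (min t T) (fst x)}"
  proof (cases "x \<in> ?\<Omega>")
    case False
    then show ?thesis by (simp add: subgraph_def)
  next
    case x: True
    obtain \<omega> u where xu: "x = (\<omega>, u)" and w: "\<omega> \<in> space M"
      using x by (cases x) (auto simp: space_pair_measure)
    have bounds: "0 \<le> X (min s T) \<omega>" "X (min t T) \<omega> \<le> X T \<omega>"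
      using integrable_increasing_nonneg[OF X w] integrable_increasing_mono[OF X w] st T by auto
    have sub: "(\<omega>, u) \<in> subgraph M X T \<longleftrightarrow> 0 < u \<and> u \<le> X T \<omega>"
      using x by (simp add: xu subgraph_def)
    show ?thesis
    proof (cases "0 < u \<and> u \<le> X T \<omega>")
      case True
      then show ?thesis
        using x integrable_increasing_hitting_time_in_Ioc_iff[OF X w T _ st(1) less_imp_le[OF st(2)], of u]
        by (simp add: sub xu time_change_def mem_Times_iff)
    next
      case False
      then show ?thesis using bounds by (auto simp: sub xu)
    qed
  qed
qed

context filtered_prob_space
begin

lemma time_change_measurable:
  assumes X: "integrable_increasing M X" and T: "0 < T"
  shows "time_change X T \<in> measurable (M \<Otimes>\<^sub>M lborel) (predictable_sigma M H)"
  unfolding predictable_sigma_def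
proof (rule measurable_measure_of[OF predictable_rectangles_subset])
  let ?\<Omega> = "space (M \<Otimes>\<^sub>M lborel)"
  let ?r = "\<lambda>x. hitting_time (\<lambda>s. X s (fst x)) T (snd x)"
  have le: "?r x \<le> t \<longleftrightarrow> T \<le> t \<or> (0 \<le> t \<and> snd x \<le> X t (fst x))" if "x \<in> ?\<Omega>" for x t
    using integrable_increasing_hitting_time_le_iff[OF X _ less_imp_le[OF T]] that
    by (auto simp: space_pair_measure)
  have nonneg: "0 \<le> ?r x" if "x \<in> ?\<Omega>" for x
    using integrable_increasing_hitting_time_nonneg[OF X _ less_imp_le[OF T]] that
    by (auto simp: space_pair_measure)
  show "time_change X T \<in> ?\<Omega> \<rightarrow> space M \<times> {0..}"
    using nonneg by (auto simp: time_change_def space_pair_measure)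
  fix G assume "G \<in> predictable_rectangles M H"
  then show "time_change X T -` G \<inter> ?\<Omega> \<in> sets (M \<Otimes>\<^sub>M lborel)"
  proof (cases rule: predictable_rectangles_cases)
    case (zero A)
    have [measurable]: "A \<in> sets M" "X 0 \<in> borel_measurable M"
      using sets_H[of 0] zero integrable_increasingD(5)[OF X] by auto
    have "time_change X T x \<in> G \<longleftrightarrow> fst x \<in> A \<and> snd x \<le> X 0 (fst x)" if "x \<in> ?\<Omega>" for x
    proof -
      have "?r x = 0 \<longleftrightarrow> ?r x \<le> 0" using nonneg[OF that] by linarith
      then show ?thesis using le[OF that, of 0] T by (simp add: zero(1) time_change_def mem_Times_iff)
    qed
    then have "time_change X T -` G \<inter> ?\<Omega> = {x \<in> ?\<Omega>. fst x \<in> A \<and> snd x \<le> X 0 (fst x)}"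
      by blast
    also have "\<dots> \<in> sets (M \<Otimes>\<^sub>M lborel)" by measurable
    finally show ?thesis .
  next
    case (interval A s t)
    have [measurable]: "A \<in> sets M" "X s \<in> borel_measurable M" "X t \<in> borel_measurable M"
      using sets_H[of s] interval integrable_increasingD(5)[OF X] by auto
    have "time_change X T x \<in> G \<longleftrightarrow> fst x \<in> A \<and>
        \<not> (T \<le> s \<or> snd x \<le> X s (fst x)) \<and> (T \<le> t \<or> snd x \<le> X t (fst x))" if "x \<in> ?\<Omega>" for x
    proof -
      have "s < ?r x \<longleftrightarrow> \<not> (T \<le> s \<or> snd x \<le> X s (fst x))"
        using le[OF that, of s] interval(2) by (meson not_le)
      then show ?thesis using le[OF that, of t] interval(2,3)
        by (simp add: interval(1) time_change_def mem_Times_iff)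
    qed
    then have "time_change X T -` G \<inter> ?\<Omega> = {x \<in> ?\<Omega>. fst x \<in> A \<and>
        \<not> (T \<le> s \<or> snd x \<le> X s (fst x)) \<and> (T \<le> t \<or> snd x \<le> X t (fst x))}"
      by blast
    also have "\<dots> \<in> sets (M \<Otimes>\<^sub>M lborel)" by measurable
    finally show ?thesis .
  qed
qed

lemma emeasure_doleans:
  assumes X: "integrable_increasing M X" and T: "0 < T" and G: "G \<in> sets (predictable_sigma M H)"
  shows "emeasure (doleans M H X T) G =
    emeasure (M \<Otimes>\<^sub>M lborel) (subgraph M X T \<inter> (time_change X T -` G \<inter> space (M \<Otimes>\<^sub>M lborel)))"
proof -
  have m: "time_change X T \<in> measurable (density (M \<Otimes>\<^sub>M lborel) (indicator (subgraph M X T))) (predictable_sigma M H)"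
    using time_change_measurable[OF X T] by simp
  have "emeasure (doleans M H X T) G = emeasure (density (M \<Otimes>\<^sub>M lborel) (indicator (subgraph M X T)))
      (time_change X T -` G \<inter> space (M \<Otimes>\<^sub>M lborel))"
    unfolding doleans_def by (subst emeasure_distr[OF m G]) simp
  also have "\<dots> = emeasure (M \<Otimes>\<^sub>M lborel) (subgraph M X T \<inter> (time_change X T -` G \<inter> space (M \<Otimes>\<^sub>M lborel)))"
    using subgraph_sets[OF X] measurable_sets[OF time_change_measurable[OF X T] G] T
    by (intro emeasure_restricted) auto
  finally show ?thesis .
qed

lemma emeasure_doleans_zero_rectangle:
  assumes X: "integrable_increasing M X" and T: "0 < T" and A: "A \<in> H 0"
  shows "emeasure (doleans M H X T) (A \<times> {0}) = 0"
proof -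
  have "subgraph M X T \<inter> (time_change X T -` (A \<times> {0}) \<inter> space (M \<Otimes>\<^sub>M lborel)) = {}"
  proof (intro equals0I)
    fix x assume "x \<in> subgraph M X T \<inter> (time_change X T -` (A \<times> {0}) \<inter> space (M \<Otimes>\<^sub>M lborel))"
    then have x: "x \<in> subgraph M X T" and zero: "snd (time_change X T x) = 0"
      by (simp_all add: mem_Times_iff)
    have w: "fst x \<in> space M" and u: "0 < snd x"
      using x by (auto simp: subgraph_def space_pair_measure)
    show False
      using integrable_increasing_hitting_time_pos[OF X w T u] zero by (simp add: time_change_def)
  qed
  then show ?thesis
    using A by (simp add: emeasure_doleans[OF X T] predictable_rectangle_sets predictable_rectangle_zeroI)
qed

lemma emeasure_doleans_rectangle:
  assumes X: "integrable_increasing M X" and T: "0 < T" and A: "A \<in> H s" and st: "0 \<le> s" "s < t"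
  shows "emeasure (doleans M H X T) (A \<times> {s<..t}) =
    ennreal (\<integral>\<omega>. indicator A \<omega> * (X (min t T) \<omega> - X (min s T) \<omega>) \<partial>M)"
proof -
  let ?\<Omega> = "space (M \<Otimes>\<^sub>M lborel)"
  have meas: "A \<in> sets M" "X (min s T) \<in> borel_measurable M" "X (min t T) \<in> borel_measurable M"
    using sets_H[OF st(1)] A integrable_increasingD(5)[OF X] st T by auto
  have incr: "X (min s T) \<omega> \<le> X (min t T) \<omega>" if "\<omega> \<in> space M" for \<omega>
    using integrable_increasing_mono[OF X that, of "min s T" "min t T"] st T by auto
  have "subgraph M X T \<inter> (time_change X T -` (A \<times> {s<..t}) \<inter> ?\<Omega>) =
      {x \<in> ?\<Omega>. fst x \<in> A \<and> X (min s T) (fst x) < snd x \<and> snd x \<le> X (min t T) (fst x)}"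
    by (rule subgraph_inter_time_change_vimage[OF X T st])
  then have "emeasure (doleans M H X T) (A \<times> {s<..t}) = emeasure (M \<Otimes>\<^sub>M lborel)
      {x \<in> ?\<Omega>. fst x \<in> A \<and> X (min s T) (fst x) < snd x \<and> snd x \<le> X (min t T) (fst x)}"
    using A st by (simp add: emeasure_doleans[OF X T] predictable_rectangle_sets predictable_rectangleI)
  also have "\<dots> = (\<integral>\<^sup>+\<omega>. indicator A \<omega> * ennreal (X (min t T) \<omega> - X (min s T) \<omega>) \<partial>M)"
    by (rule emeasure_pair_lborel_between[OF meas(2,3,1) incr])
  also have "\<dots> = (\<integral>\<^sup>+\<omega>. ennreal (indicator A \<omega> * (X (min t T) \<omega> - X (min s T) \<omega>)) \<partial>M)"
    by (intro nn_integral_cong) (auto simp: indicator_def)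
  also have "\<dots> = ennreal (\<integral>\<omega>. indicator A \<omega> * (X (min t T) \<omega> - X (min s T) \<omega>) \<partial>M)"
  proof (rule nn_integral_eq_integral)
    show "integrable M (\<lambda>\<omega>. indicator A \<omega> * (X (min t T) \<omega> - X (min s T) \<omega>))"
      using integrable_mult_indicator[of A M "\<lambda>\<omega>. X (min t T) \<omega> - X (min s T) \<omega>"]
        meas(1) integrable_increasingD(4)[OF X] st T by auto
    show "AE \<omega> in M. 0 \<le> indicator A \<omega> * (X (min t T) \<omega> - X (min s T) \<omega>)"
      using incr by (intro AE_I2) auto
  qed
  finally show ?thesis .
qed

lemma emeasure_doleans_finite:
  assumes X: "integrable_increasing M X" and T: "0 < T"
  shows "emeasure (doleans M H X T) G \<noteq> \<infinity>"
proof -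
  have "emeasure (doleans M H X T) G \<le> emeasure (doleans M H X T) (space (doleans M H X T))"
    by (rule emeasure_space)
  also have "\<dots> = emeasure (M \<Otimes>\<^sub>M lborel)
      (subgraph M X T \<inter> (time_change X T -` space (doleans M H X T) \<inter> space (M \<Otimes>\<^sub>M lborel)))"
    by (rule emeasure_doleans[OF X T]) (simp add: doleans_def)
  also have "\<dots> \<le> emeasure (M \<Otimes>\<^sub>M lborel) (subgraph M X T)"
    using subgraph_sets[OF X] T by (intro emeasure_mono) auto
  also have "\<dots> < \<infinity>"
    using integrable_indicator_subgraph[OF X] subgraph_sets[OF X] T
    by (subst (asm) integrable_indicator_iff) auto
  finally show ?thesis by simp
qed

lemma doleans_eqI:
  assumes X: "integrable_increasing M X" and Y: "integrable_increasing M Y" and T: "0 < T"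
    and increments: "\<And>s t B. 0 \<le> s \<Longrightarrow> s \<le> t \<Longrightarrow> B \<in> H s \<Longrightarrow>
      (\<integral>\<omega>. indicator B \<omega> * (X t \<omega> - X s \<omega>) \<partial>M) = (\<integral>\<omega>. indicator B \<omega> * (Y t \<omega> - Y s \<omega>) \<partial>M)"
  shows "doleans M H X T = doleans M H Y T"
proof -
  define C where "C i = (case i of 0 \<Rightarrow> space M \<times> {0} | Suc n \<Rightarrow> space M \<times> {real n<..real n + 1})" for i
  have sets_doleans: "sets (doleans M H Z T) = sigma_sets (space M \<times> {0..}) (predictable_rectangles M H)" for Z
    using predictable_rectangles_subset by (simp add: doleans_def predictable_sigma_def sets_measure_of)
  show ?thesis
  proof (rule measure_eqI_generator_eq[OF Int_stable_predictable_rectangles predictable_rectangles_subset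
        _ _ _ _ _ emeasure_doleans_finite[OF X T], where A=C])
    show "range C \<subseteq> predictable_rectangles M H"
      using space_in_H by (auto simp: C_def split: nat.splits intro!: predictable_rectangle_zeroI predictable_rectangleI)
    show "(\<Union>i. C i) = space M \<times> {0..}"
    proof (intro set_eqI iffI)
      fix x :: "'a \<times> real" assume "x \<in> (\<Union>i. C i)"
      then obtain i where "x \<in> C i" by blast
      then show "x \<in> space M \<times> {0..}" by (cases i) (auto simp: C_def)
    next
      fix x :: "'a \<times> real" assume x: "x \<in> space M \<times> {0..}"
      show "x \<in> (\<Union>i. C i)"
      proof (cases "snd x = 0")
        case True then show ?thesis using x by (auto simp: C_def intro!: exI[of _ 0] mem_Times_iff[THEN iffD2])
      next
        case False
        define n where "n = nat (\<lceil>snd x\<rceil> - 1)"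
        have "real n < snd x" "snd x \<le> real n + 1" using False x unfolding n_def
          by (auto simp: of_nat_nat) linarith+
        then show ?thesis using x by (auto simp: C_def intro!: exI[of _ "Suc n"] mem_Times_iff[THEN iffD2])
      qed
    qed
    fix G assume "G \<in> predictable_rectangles M H"
    then show "emeasure (doleans M H X T) G = emeasure (doleans M H Y T) G"
    proof (cases rule: predictable_rectangles_cases)
      case (zero A)
      then show ?thesis using emeasure_doleans_zero_rectangle[OF X T] emeasure_doleans_zero_rectangle[OF Y T] by simp
    next
      case (interval A s t)
      then have "(\<integral>\<omega>. indicator A \<omega> * (X (min t T) \<omega> - X (min s T) \<omega>) \<partial>M) =
          (\<integral>\<omega>. indicator A \<omega> * (Y (min t T) \<omega> - Y (min s T) \<omega>) \<partial>M)"
        using increments[of s "min t T" A] by (cases "s < T") (auto simp: min_def)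
      then show ?thesis using interval
        by (simp add: emeasure_doleans_rectangle[OF X T] emeasure_doleans_rectangle[OF Y T])
    qed
  qed (use sets_doleans in auto)
qed

lemma integral_doleans:
  fixes f :: "'a \<times> real \<Rightarrow> real"
  assumes X: "integrable_increasing M X" and T: "0 < T" and f: "f \<in> borel_measurable (predictable_sigma M H)"
  shows "integral\<^sup>L (doleans M H X T) f =
    (\<integral>x. indicator (subgraph M X T) x * f (time_change X T x) \<partial>(M \<Otimes>\<^sub>M lborel))"
proof -
  have D: "density (M \<Otimes>\<^sub>M lborel) (indicator (subgraph M X T)) =
      density (M \<Otimes>\<^sub>M lborel) (\<lambda>x. ennreal (indicator (subgraph M X T) x))"
    by (simp add: ennreal_indicator)
  have "integral\<^sup>L (doleans M H X T) f =
      integral\<^sup>L (density (M \<Otimes>\<^sub>M lborel) (\<lambda>x. ennreal (indicator (subgraph M X T) x))) (\<lambda>x. f (time_change X T x))"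
    unfolding doleans_def D using time_change_measurable[OF X T] f by (intro integral_distr) auto
  also have "\<dots> = (\<integral>x. indicator (subgraph M X T) x * f (time_change X T x) \<partial>(M \<Otimes>\<^sub>M lborel))"
    using measurable_comp[OF time_change_measurable[OF X T] f] subgraph_sets[OF X] T
    by (subst integral_density) (auto simp: comp_def)
  finally show ?thesis .
qed

end

section \<open>Predictable increasing processes are determined by their conditional increments\<close>

definition grid :: "real \<Rightarrow> nat \<Rightarrow> nat \<Rightarrow> real" where
  "grid T n k = T * real k / real (Suc n)"

lemma grid_zero [simp]: "grid T n 0 = 0"
  by (simp add: grid_def)

lemma grid_last [simp]: "grid T n (Suc n) = T"
  by (simp add: grid_def)

lemma grid_nonneg: "0 \<le> T \<Longrightarrow> 0 \<le> grid T n k"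
  by (simp add: grid_def)

lemma grid_mono: "0 \<le> T \<Longrightarrow> k \<le> j \<Longrightarrow> grid T n k \<le> grid T n j"
  unfolding grid_def by (intro divide_right_mono mult_left_mono) auto

lemma grid_le: "0 \<le> T \<Longrightarrow> k \<le> Suc n \<Longrightarrow> grid T n k \<le> T"
  using grid_mono[of T k "Suc n" n] by simp

lemma grid_step: "1 \<le> k \<Longrightarrow> grid T n k = grid T n (k - 1) + T / real (Suc n)"
  by (simp add: grid_def of_nat_diff diff_divide_distrib right_diff_distrib)

lemma grid_cell:
  assumes T: "0 < T" and r: "0 < r" "r \<le> T"
  obtains k where "k \<in> {1..Suc n}" "grid T n (k - 1) < r" "r \<le> grid T n k"
proof -
  define N where "N = real (Suc n)"
  have N: "0 < N" by (simp add: N_def)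
  define k where "k = nat \<lceil>r * N / T\<rceil>"
  have pos: "0 < r * N / T" using T r N by simp
  have c1: "1 \<le> \<lceil>r * N / T\<rceil>" using pos by (simp add: one_le_ceiling)
  have "r * N / T \<le> N" using r T N by (simp add: divide_le_eq)
  hence c2: "\<lceil>r * N / T\<rceil> \<le> Suc n" unfolding N_def by (simp add: ceiling_le_iff)
  have kk: "real k = \<lceil>r * N / T\<rceil>" unfolding k_def using c1 by simp
  have k: "k \<in> {1..Suc n}" using c1 c2 by (simp add: k_def le_nat_iff nat_le_iff)
  moreover have "r \<le> grid T n k"
  proof -
    have "r * N / T \<le> real k" using kk by (simp add: le_ceiling_iff)
    hence "r * N \<le> real k * T" using T by (simp add: divide_le_eq)
    thus ?thesis unfolding grid_def N_def[symmetric] using N by (simp add: le_divide_eq mult.commute)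
  qed
  moreover have "grid T n (k - 1) < r"
  proof -
    have "real k - 1 < r * N / T" using kk by linarith
    hence "(real k - 1) * T < r * N" using T by (simp add: less_divide_eq)
    thus ?thesis unfolding grid_def N_def[symmetric] using k N by (simp add: of_nat_diff divide_less_eq mult.commute)
  qed
  ultimately show ?thesis using that by blast
qed

lemma grid_cell_unique:
  assumes T: "0 \<le> T" and "1 \<le> j" "1 \<le> k"
    and "grid T n (j - 1) < r" "r \<le> grid T n j" "grid T n (k - 1) < r" "r \<le> grid T n k"
  shows "j = k"
proof (rule ccontr)
  assume "j \<noteq> k"
  then consider "j \<le> k - 1" | "k \<le> j - 1" by linarith
  then show False
    using assms grid_mono[OF T, of j "k - 1" n] grid_mono[OF T, of k "j - 1" n] by cases auto
qed

definition riemann_step :: "(real \<Rightarrow> 'a \<Rightarrow> real) \<Rightarrow> (real \<Rightarrow> 'a \<Rightarrow> real) \<Rightarrow> real \<Rightarrow> nat \<Rightarrow> 'a \<times> real \<Rightarrow> real" where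
  "riemann_step X c T n x = (\<Sum>k\<in>{1..Suc n}. c (grid T n k) (fst x) *
     indicator {x. X (grid T n (k - 1)) (fst x) < snd x \<and> snd x \<le> X (grid T n k) (fst x)} x)"

definition riemann_sum :: "'a measure \<Rightarrow> (real \<Rightarrow> 'a \<Rightarrow> real) \<Rightarrow> (real \<Rightarrow> 'a \<Rightarrow> real) \<Rightarrow> real \<Rightarrow> nat \<Rightarrow> real" where
  "riemann_sum M X c T n =
     (\<Sum>k\<in>{1..Suc n}. \<integral>\<omega>. c (grid T n k) \<omega> * (X (grid T n k) \<omega> - X (grid T n (k - 1)) \<omega>) \<partial>M)"

lemma riemann_step_subgraph:
  assumes X: "integrable_increasing M X" and T: "0 < T" and x: "x \<in> subgraph M X T"
  obtains k where "k \<in> {1..Suc n}"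
    "grid T n (k - 1) < hitting_time (\<lambda>s. X s (fst x)) T (snd x)"
    "hitting_time (\<lambda>s. X s (fst x)) T (snd x) \<le> grid T n k"
    "riemann_step X c T n x = c (grid T n k) (fst x)"
proof -
  let ?r = "hitting_time (\<lambda>s. X s (fst x)) T (snd x)"
  have w: "fst x \<in> space M" and u: "0 < snd x" "snd x \<le> X T (fst x)"
    using x by (auto simp: subgraph_def space_pair_measure)
  have "?r \<le> T"
    using integrable_increasing_hitting_time_le_iff[OF X w less_imp_le[OF T]] by simp
  then obtain k where k: "k \<in> {1..Suc n}" "grid T n (k - 1) < ?r" "?r \<le> grid T n k"
    using grid_cell[OF T integrable_increasing_hitting_time_pos[OF X w T u(1)]] by blast
  have "indicator {x. X (grid T n (j - 1)) (fst x) < snd x \<and> snd x \<le> X (grid T n j) (fst x)} x =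
      (if j = k then 1 else 0 :: real)" if j: "j \<in> {1..Suc n}" for j
  proof -
    have "grid T n (j - 1) \<le> grid T n j" "grid T n (j - 1) \<le> T" "grid T n j \<le> T"
      using j T grid_mono[of T "j - 1" j n] grid_le[of T "j - 1" n] grid_le[of T j n] by auto
    then have cell: "X (grid T n (j - 1)) (fst x) < snd x \<and> snd x \<le> X (grid T n j) (fst x) \<longleftrightarrow>
        grid T n (j - 1) < ?r \<and> ?r \<le> grid T n j"
      using integrable_increasing_hitting_time_in_Ioc_iff[OF X w T u(2) grid_nonneg]
        T by (simp add: min_def)
    moreover have "grid T n (j - 1) < ?r \<and> ?r \<le> grid T n j \<longleftrightarrow> j = k"
      using k j grid_cell_unique[of T j k n ?r] T by auto
    ultimately show ?thesis by (simp add: indicator_def)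
  qed
  then have "riemann_step X c T n x = (\<Sum>j\<in>{1..Suc n}. if j = k then c (grid T n k) (fst x) else 0)"
    unfolding riemann_step_def by (intro sum.cong) auto
  also have "\<dots> = c (grid T n k) (fst x)" using k(1) by simp
  finally show ?thesis using k that by blast
qed

lemma riemann_step_outside_subgraph:
  assumes X: "integrable_increasing M X" and T: "0 \<le> T"
    and x: "x \<in> space (M \<Otimes>\<^sub>M lborel)" "x \<notin> subgraph M X T"
  shows "riemann_step X c T n x = 0"
proof -
  have w: "fst x \<in> space M" using x by (auto simp: space_pair_measure)
  have "\<not> (X (grid T n (k - 1)) (fst x) < snd x \<and> snd x \<le> X (grid T n k) (fst x))"
    if k: "k \<le> Suc n" for k
  proof
    assume "X (grid T n (k - 1)) (fst x) < snd x \<and> snd x \<le> X (grid T n k) (fst x)"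
    moreover have "0 \<le> X (grid T n (k - 1)) (fst x)"
      using integrable_increasing_nonneg[OF X w grid_nonneg[OF T]] .
    moreover have "X (grid T n k) (fst x) \<le> X T (fst x)"
      using integrable_increasing_mono[OF X w grid_nonneg[OF T] grid_le[OF T k]] .
    ultimately show False using x by (auto simp: subgraph_def)
  qed
  then show ?thesis unfolding riemann_step_def by (intro sum.neutral) auto
qed

lemma abs_riemann_step_le:
  assumes X: "integrable_increasing M X" and T: "0 < T" and c: "\<And>t \<omega>. \<bar>c t \<omega>\<bar> \<le> 1"
    and x: "x \<in> space (M \<Otimes>\<^sub>M lborel)"
  shows "\<bar>riemann_step X c T n x\<bar> \<le> indicator (subgraph M X T) x"
proof (cases "x \<in> subgraph M X T")
  case True
  then obtain k where "riemann_step X c T n x = c (grid T n k) (fst x)"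
    by (rule riemann_step_subgraph[OF X T])
  then show ?thesis using True c by simp
next
  case False
  then show ?thesis using riemann_step_outside_subgraph[OF X _ x False] T by simp
qed

lemma riemann_step_tendsto:
  assumes X: "integrable_increasing M X" and T: "0 < T" and x: "x \<in> subgraph M X T"
    and c: "continuous (at_right (hitting_time (\<lambda>s. X s (fst x)) T (snd x))) (\<lambda>t. c t (fst x))"
  shows "(\<lambda>n. riemann_step X c T n x) \<longlonglongrightarrow> c (hitting_time (\<lambda>s. X s (fst x)) T (snd x)) (fst x)"
proof -
  let ?r = "hitting_time (\<lambda>s. X s (fst x)) T (snd x)"
  have "\<forall>n. \<exists>k. k \<in> {1..Suc n} \<and> grid T n (k - 1) < ?r \<and> ?r \<le> grid T n k \<and>
      riemann_step X c T n x = c (grid T n k) (fst x)"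
  proof
    fix n
    show "\<exists>k. k \<in> {1..Suc n} \<and> grid T n (k - 1) < ?r \<and> ?r \<le> grid T n k \<and>
      riemann_step X c T n x = c (grid T n k) (fst x)"
      by (rule riemann_step_subgraph[OF X T x, of n c]) blast
  qed
  from choice[OF this] obtain K where K: "\<forall>n. K n \<in> {1..Suc n} \<and> grid T n (K n - 1) < ?r \<and>
      ?r \<le> grid T n (K n) \<and> riemann_step X c T n x = c (grid T n (K n)) (fst x)"
    by blast
  have "grid T n (K n) < ?r + T / real (Suc n)" for n
    using K grid_step[of "K n" T n] by auto
  moreover have ge: "?r \<le> grid T n (K n)" for n using K by blast
  ultimately have "(\<lambda>n. grid T n (K n)) \<longlonglongrightarrow> ?r" by (intro tendsto_squeeze_from_above)
  moreover have "riemann_step X c T n x = c (grid T n (K n)) (fst x)" for n using K by blast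
  ultimately show ?thesis using ge by (simp add: right_continuous_tendsto_from_above[OF c])
qed

lemma integral_riemann_step:
  assumes M: "sigma_finite_measure M" and X: "integrable_increasing M X" and T: "0 \<le> T"
    and c: "\<And>t. 0 \<le> t \<Longrightarrow> c t \<in> borel_measurable M" "\<And>t \<omega>. \<bar>c t \<omega>\<bar> \<le> 1"
  shows "integrable (M \<Otimes>\<^sub>M lborel) (riemann_step X c T n)"
    and "integral\<^sup>L (M \<Otimes>\<^sub>M lborel) (riemann_step X c T n) = riemann_sum M X c T n"
proof -
  have between: "integrable (M \<Otimes>\<^sub>M lborel) (\<lambda>x. c (grid T n k) (fst x) *
        indicator {x. X (grid T n (k - 1)) (fst x) < snd x \<and> snd x \<le> X (grid T n k) (fst x)} x) \<and>
      (\<integral>x. c (grid T n k) (fst x) *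
        indicator {x. X (grid T n (k - 1)) (fst x) < snd x \<and> snd x \<le> X (grid T n k) (fst x)} x
        \<partial>(M \<Otimes>\<^sub>M lborel)) =
      (\<integral>\<omega>. c (grid T n k) \<omega> * (X (grid T n k) \<omega> - X (grid T n (k - 1)) \<omega>) \<partial>M)" for k
  proof -
    have g: "0 \<le> grid T n (k - 1)" "0 \<le> grid T n k" "grid T n (k - 1) \<le> grid T n k"
      using grid_nonneg[OF T] grid_mono[OF T] by auto
    show ?thesis
      using integral_pair_lborel_between[OF M, of "X (grid T n (k - 1))" "X (grid T n k)" "c (grid T n k)"]
        g integrable_increasingD(4,5)[OF X] integrable_increasing_mono[OF X] c by auto
  qed
  have step: "riemann_step X c T n = (\<lambda>x. \<Sum>k\<in>{1..Suc n}. c (grid T n k) (fst x) *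
     indicator {x. X (grid T n (k - 1)) (fst x) < snd x \<and> snd x \<le> X (grid T n k) (fst x)} x)"
    by (simp add: riemann_step_def fun_eq_iff)
  show "integrable (M \<Otimes>\<^sub>M lborel) (riemann_step X c T n)"
    unfolding step using between by (intro Bochner_Integration.integrable_sum) blast
  show "integral\<^sup>L (M \<Otimes>\<^sub>M lborel) (riemann_step X c T n) = riemann_sum M X c T n"
    unfolding step riemann_sum_def using between
    by (subst Bochner_Integration.integral_sum) simp_all
qed

context filtered_prob_space
begin

lemma riemann_sum_tendsto_integral_doleans:
  fixes c :: "real \<Rightarrow> 'a \<Rightarrow> real" and f :: "'a \<times> real \<Rightarrow> real"
  assumes X: "integrable_increasing M X" and T: "0 < T"
    and c: "\<And>t. 0 \<le> t \<Longrightarrow> c t \<in> borel_measurable M" "\<And>t \<omega>. \<bar>c t \<omega>\<bar> \<le> 1"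
      "\<And>\<omega> t. \<omega> \<in> space M \<Longrightarrow> 0 \<le> t \<Longrightarrow> continuous (at_right t) (\<lambda>s. c s \<omega>)"
    and f: "f \<in> borel_measurable (predictable_sigma M H)"
    and fc: "\<And>\<omega> t. \<omega> \<in> space M \<Longrightarrow> 0 \<le> t \<Longrightarrow> f (\<omega>, t) = c t \<omega>"
  shows "riemann_sum M X c T \<longlonglongrightarrow> integral\<^sup>L (doleans M H X T) f"
proof -
  let ?g = "\<lambda>x. indicator (subgraph M X T) x * f (time_change X T x)"
  note step = integral_riemann_step[OF prob_space_imp_sigma_finite[OF prob_space_axioms] X
      less_imp_le[OF T] c(1,2)]
  have "(\<lambda>n. integral\<^sup>L (M \<Otimes>\<^sub>M lborel) (riemann_step X c T n)) \<longlonglongrightarrow> integral\<^sup>L (M \<Otimes>\<^sub>M lborel) ?g"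
  proof (rule integral_dominated_convergence[OF _ _ integrable_indicator_subgraph[OF X less_imp_le[OF T]]])
    show "?g \<in> borel_measurable (M \<Otimes>\<^sub>M lborel)"
      using measurable_comp[OF time_change_measurable[OF X T] f] subgraph_sets[OF X] T
      by (auto simp: comp_def)
    show "riemann_step X c T n \<in> borel_measurable (M \<Otimes>\<^sub>M lborel)" for n
      using step(1) by (rule borel_measurable_integrable)
    show "AE x in M \<Otimes>\<^sub>M lborel. norm (riemann_step X c T n x) \<le> indicator (subgraph M X T) x" for n
      using abs_riemann_step_le[OF X T c(2)] by (intro AE_I2) simp
    show "AE x in M \<Otimes>\<^sub>M lborel. (\<lambda>n. riemann_step X c T n x) \<longlonglongrightarrow> ?g x"
    proof (rule AE_I2)
      fix x :: "'a \<times> real" assume x: "x \<in> space (M \<Otimes>\<^sub>M lborel)"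
      show "(\<lambda>n. riemann_step X c T n x) \<longlonglongrightarrow> ?g x"
      proof (cases "x \<in> subgraph M X T")
        case True
        let ?r = "hitting_time (\<lambda>s. X s (fst x)) T (snd x)"
        have w: "fst x \<in> space M" using x by (auto simp: space_pair_measure)
        have r: "0 \<le> ?r" using integrable_increasing_hitting_time_nonneg[OF X w less_imp_le[OF T]] .
        have "?g x = c ?r (fst x)" using True fc[OF w r] by (simp add: time_change_def)
        then show ?thesis using riemann_step_tendsto[OF X T True, of c] c(3)[OF w r] by simp
      next
        case False
        then show ?thesis using riemann_step_outside_subgraph[OF X _ x False] T by simp
      qed
    qed
  qed
  then show ?thesis using step(2) integral_doleans[OF X T f] by simp
qed

end

definition clip :: "real \<Rightarrow> real" where
  "clip x = max (-1) (min 1 x)"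

definition huber :: "real \<Rightarrow> real" where
  "huber x = (if \<bar>x\<bar> \<le> 1 then x\<^sup>2 / 2 else \<bar>x\<bar> - 1 / 2)"

lemma huber_nonneg: "0 \<le> huber x"
  by (simp add: huber_def)

lemma huber_eq_0_iff: "huber x = 0 \<longleftrightarrow> x = 0"
  by (auto simp: huber_def)

lemma huber_le_abs: "huber x \<le> \<bar>x\<bar>"
proof (cases "\<bar>x\<bar> \<le> 1")
  case True
  then have "\<bar>x\<bar> * \<bar>x\<bar> \<le> \<bar>x\<bar> * 1" by (intro mult_left_mono) auto
  then show ?thesis using True by (simp add: huber_def power2_eq_square)
qed (simp add: huber_def)

lemma huber_subgradient: "huber y - huber x \<le> clip y * (y - x)"
proof -
  have affine: "x - 1 / 2 \<le> huber x" "- x - 1 / 2 \<le> huber x"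
    using zero_le_power2[of "x - 1"] zero_le_power2[of "x + 1"]
    by (auto simp: huber_def power2_eq_square algebra_simps)
  show ?thesis
  proof (cases "\<bar>y\<bar> \<le> 1")
    case True
    have "x * y - y\<^sup>2 / 2 \<le> huber x"
    proof (cases "\<bar>x\<bar> \<le> 1")
      case True
      then show ?thesis using zero_le_power2[of "x - y"] by (simp add: huber_def power2_eq_square algebra_simps)
    next
      case False
      have "0 \<le> (1 - \<bar>y\<bar>) * (\<bar>x\<bar> - (1 + \<bar>y\<bar>) / 2)" using True False by (intro mult_nonneg_nonneg) auto
      moreover have "(1 - \<bar>y\<bar>) * (\<bar>x\<bar> - (1 + \<bar>y\<bar>) / 2) = \<bar>x\<bar> - \<bar>x\<bar> * \<bar>y\<bar> - 1 / 2 + y\<^sup>2 / 2"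
        by (simp add: algebra_simps add_divide_distrib diff_divide_distrib power2_eq_square)
      moreover have "x * y \<le> \<bar>x\<bar> * \<bar>y\<bar>" by (metis abs_ge_self abs_mult)
      ultimately have "x * y - y\<^sup>2 / 2 \<le> \<bar>x\<bar> - 1 / 2" by linarith
      then show ?thesis using False by (simp add: huber_def)
    qed
    then show ?thesis using True by (simp add: clip_def huber_def algebra_simps power2_eq_square)
  next
    case False
    then consider "1 < y" | "y < -1" by linarith
    then show ?thesis using affine by cases (auto simp: clip_def huber_def)
  qed
qed

lemma integrable_huber:
  assumes "integrable M f"
  shows "integrable M (\<lambda>\<omega>. huber (f \<omega>))"
proof (rule Bochner_Integration.integrable_bound[OF assms])
  have [measurable]: "f \<in> borel_measurable M" using assms by (rule borel_measurable_integrable)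
  show "(\<lambda>\<omega>. huber (f \<omega>)) \<in> borel_measurable M" unfolding huber_def by measurable
  show "AE \<omega> in M. norm (huber (f \<omega>)) \<le> norm (f \<omega>)"
    using huber_le_abs huber_nonneg by (intro AE_I2) auto
qed

lemma integral_huber_le_riemann_sum_diff:
  assumes X: "integrable_increasing M X" and Y: "integrable_increasing M Y" and T: "0 \<le> T"
  defines "c \<equiv> \<lambda>t \<omega>. clip (X t \<omega> - Y t \<omega>)"
  shows "(\<integral>\<omega>. huber (X T \<omega> - Y T \<omega>) \<partial>M) \<le> riemann_sum M X c T n - riemann_sum M Y c T n"
proof -
  define D where "D k \<omega> = X (grid T n k) \<omega> - Y (grid T n k) \<omega>" for k \<omega>
  define w where "w k \<omega> = clip (D k \<omega>) * (D k \<omega> - D (k - 1) \<omega>)" for k \<omega>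
  have int_incr: "integrable M (\<lambda>\<omega>. c (grid T n k) \<omega> * (Z (grid T n k) \<omega> - Z (grid T n (k - 1)) \<omega>))"
    if Z: "integrable_increasing M Z" for Z k
  proof (rule Bochner_Integration.integrable_bound)
    show "integrable M (\<lambda>\<omega>. Z (grid T n k) \<omega> - Z (grid T n (k - 1)) \<omega>)"
      using integrable_increasingD(4)[OF Z] grid_nonneg[OF T] by auto
    have [measurable]: "X t \<in> borel_measurable M" "Y t \<in> borel_measurable M" "Z t \<in> borel_measurable M"
      if "0 \<le> t" for t
      using integrable_increasingD(5) X Y Z that by blast+
    show "(\<lambda>\<omega>. c (grid T n k) \<omega> * (Z (grid T n k) \<omega> - Z (grid T n (k - 1)) \<omega>)) \<in> borel_measurable M"
      using grid_nonneg[OF T] unfolding c_def clip_def by measurable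
    show "AE \<omega> in M. norm (c (grid T n k) \<omega> * (Z (grid T n k) \<omega> - Z (grid T n (k - 1)) \<omega>))
        \<le> norm (Z (grid T n k) \<omega> - Z (grid T n (k - 1)) \<omega>)"
      by (intro AE_I2) (auto simp: c_def clip_def abs_mult intro!: mult_left_le_one_le)
  qed
  have w_eq: "w k = (\<lambda>\<omega>. c (grid T n k) \<omega> * (X (grid T n k) \<omega> - X (grid T n (k - 1)) \<omega>) -
      c (grid T n k) \<omega> * (Y (grid T n k) \<omega> - Y (grid T n (k - 1)) \<omega>))" for k
    by (simp add: fun_eq_iff w_def D_def c_def algebra_simps)
  have int_w: "integrable M (w k)" for k
    unfolding w_eq using int_incr[OF X] int_incr[OF Y] by (rule Bochner_Integration.integrable_diff)
  have "riemann_sum M X c T n - riemann_sum M Y c T n = (\<Sum>k\<in>{1..Suc n}. \<integral>\<omega>. w k \<omega> \<partial>M)"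
    unfolding riemann_sum_def sum_subtractf[symmetric] w_eq
    by (intro sum.cong refl) (rule Bochner_Integration.integral_diff[symmetric, OF int_incr[OF X] int_incr[OF Y]])
  also have "\<dots> = (\<integral>\<omega>. (\<Sum>k\<in>{1..Suc n}. w k \<omega>) \<partial>M)"
    using int_w by (rule Bochner_Integration.integral_sum[symmetric])
  finally have sums: "riemann_sum M X c T n - riemann_sum M Y c T n = (\<integral>\<omega>. (\<Sum>k\<in>{1..Suc n}. w k \<omega>) \<partial>M)" .
  have "(\<integral>\<omega>. huber (X T \<omega> - Y T \<omega>) \<partial>M) \<le> (\<integral>\<omega>. (\<Sum>k\<in>{1..Suc n}. w k \<omega>) \<partial>M)"
  proof (rule integral_mono)
    show "integrable M (\<lambda>\<omega>. huber (X T \<omega> - Y T \<omega>))"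
      using integrable_increasingD(4)[OF X T] integrable_increasingD(4)[OF Y T] by (intro integrable_huber) auto
    show "integrable M (\<lambda>\<omega>. \<Sum>k\<in>{1..Suc n}. w k \<omega>)"
      using int_w by (rule Bochner_Integration.integrable_sum)
  next
    fix \<omega> assume w: "\<omega> \<in> space M"
    have "huber (X T \<omega> - Y T \<omega>) = huber (D (Suc n) \<omega>) - huber (D 0 \<omega>)"
      using integrable_increasingD(1)[OF X w] integrable_increasingD(1)[OF Y w]
      by (simp add: D_def huber_def)
    also have "\<dots> = (\<Sum>k\<in>{1..Suc n}. huber (D k \<omega>) - huber (D (k - 1) \<omega>))"
      using sum_telescope''[of 0 "Suc n" "\<lambda>k. huber (D k \<omega>)"] by simp
    also have "\<dots> \<le> (\<Sum>k\<in>{1..Suc n}. w k \<omega>)"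
      unfolding w_def by (intro sum_mono huber_subgradient)
    finally show "huber (X T \<omega> - Y T \<omega>) \<le> (\<Sum>k\<in>{1..Suc n}. w k \<omega>)" .
  qed
  then show ?thesis using sums by simp
qed

context filtered_prob_space
begin

lemma AE_eq_if_doleans_eq:
  assumes X: "integrable_increasing M X" and Y: "integrable_increasing M Y" and T: "0 < T"
    and doleans: "doleans M H X T = doleans M H Y T"
    and pX: "predictable M H X" and pY: "predictable M H Y"
  shows "AE \<omega> in M. X T \<omega> = Y T \<omega>"
proof -
  define c where "c = (\<lambda>t \<omega>. clip (X t \<omega> - Y t \<omega>))"
  define f where "f x = clip (X (snd x) (fst x) - Y (snd x) (fst x))" for x
  have [measurable]: "(\<lambda>x. X (snd x) (fst x)) \<in> borel_measurable (predictable_sigma M H)"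
      "(\<lambda>x. Y (snd x) (fst x)) \<in> borel_measurable (predictable_sigma M H)"
    using predictable_path_measurable[OF pX] predictable_path_measurable[OF pY] .
  have f: "f \<in> borel_measurable (predictable_sigma M H)" unfolding f_def clip_def by measurable
  have c_meas: "c t \<in> borel_measurable M" if "0 \<le> t" for t
  proof -
    have [measurable]: "X t \<in> borel_measurable M" "Y t \<in> borel_measurable M"
      using integrable_increasingD(5)[OF X that] integrable_increasingD(5)[OF Y that] .
    show ?thesis unfolding c_def clip_def by measurable
  qed
  have c_bound: "\<bar>c t \<omega>\<bar> \<le> 1" for t \<omega> unfolding c_def clip_def by auto
  have fc: "f (\<omega>, t) = c t \<omega>" for \<omega> t by (simp add: f_def c_def)
  have c_rc: "continuous (at_right t) (\<lambda>s. c s \<omega>)" if "\<omega> \<in> space M" "0 \<le> t" for \<omega> t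
    using integrable_increasingD(3)[OF X that] integrable_increasingD(3)[OF Y that]
    unfolding c_def clip_def by (intro continuous_intros)
  have "(\<lambda>n. riemann_sum M X c T n - riemann_sum M Y c T n) \<longlonglongrightarrow> 0"
    using tendsto_diff[OF riemann_sum_tendsto_integral_doleans[OF X T c_meas c_bound c_rc f fc]
        riemann_sum_tendsto_integral_doleans[OF Y T c_meas c_bound c_rc f fc]]
    by (simp add: doleans)
  moreover have "(\<integral>\<omega>. huber (X T \<omega> - Y T \<omega>) \<partial>M) \<le> riemann_sum M X c T n - riemann_sum M Y c T n" for n
    unfolding c_def by (rule integral_huber_le_riemann_sum_diff[OF X Y less_imp_le[OF T]])
  ultimately have "(\<integral>\<omega>. huber (X T \<omega> - Y T \<omega>) \<partial>M) \<le> 0"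
    by (intro LIMSEQ_le_const) blast+
  moreover have "0 \<le> (\<integral>\<omega>. huber (X T \<omega> - Y T \<omega>) \<partial>M)"
    by (intro Bochner_Integration.integral_nonneg huber_nonneg)
  moreover have "integrable M (\<lambda>\<omega>. huber (X T \<omega> - Y T \<omega>))"
    using integrable_increasingD(4)[OF X] integrable_increasingD(4)[OF Y] T by (intro integrable_huber) auto
  ultimately have "AE \<omega> in M. huber (X T \<omega> - Y T \<omega>) = 0"
    using integral_nonneg_eq_0_iff_AE[of M "\<lambda>\<omega>. huber (X T \<omega> - Y T \<omega>)"] huber_nonneg by simp
  then show ?thesis by (simp add: huber_eq_0_iff)
qed

lemma predictable_integrable_increasing_AE_eq:
  assumes X: "integrable_increasing M X" and Y: "integrable_increasing M Y"
    and pX: "predictable M H X" and pY: "predictable M H Y"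
    and increments: "\<And>s t B. 0 \<le> s \<Longrightarrow> s \<le> t \<Longrightarrow> B \<in> H s \<Longrightarrow>
      (\<integral>\<omega>. indicator B \<omega> * (X t \<omega> - X s \<omega>) \<partial>M) = (\<integral>\<omega>. indicator B \<omega> * (Y t \<omega> - Y s \<omega>) \<partial>M)"
  shows "AE \<omega> in M. \<forall>t\<ge>0. X t \<omega> = Y t \<omega>"
proof (rule AE_all_eq_if_right_continuous)
  fix T :: real assume "0 \<le> T"
  show "AE \<omega> in M. X T \<omega> = Y T \<omega>"
  proof (cases "T = 0")
    case True
    then show ?thesis using integrable_increasingD(1)[OF X] integrable_increasingD(1)[OF Y] by simp
  next
    case False
    with \<open>0 \<le> T\<close> have T: "0 < T" by simp
    show ?thesis by (rule AE_eq_if_doleans_eq[OF X Y T doleans_eqI[OF X Y T increments] pX pY])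
  qed
qed (use integrable_increasingD(3)[OF X] integrable_increasingD(3)[OF Y] in auto)

end

section \<open>Expansions of a filtration by a random time\<close>

locale random_time = filtered_prob_space M F for M :: "'a measure" and F :: "real \<Rightarrow> 'a set set" +
  fixes \<tau> :: "'a \<Rightarrow> real"
  assumes measurable_\<tau> [measurable]: "\<tau> \<in> borel_measurable M"
    and \<tau>_pos: "\<And>\<omega>. \<omega> \<in> space M \<Longrightarrow> 0 < \<tau> \<omega>"
begin

lemma sets_F_infty: "F_infty M F \<subseteq> sets M"
  unfolding F_infty_def by (rule sets.sigma_sets_subset) (use sets_H in auto)

lemma sets_G_infty: "G_infty M F \<tau> \<subseteq> sets M"
  unfolding G_infty_def by (rule sets.sigma_sets_subset) (use sets_F_infty in auto)

lemma sigma_algebra_G_infty: "sigma_algebra (space M) (G_infty M F \<tau>)"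
  unfolding G_infty_def using sets_F_infty sets.sets_into_space
  by (intro sigma_algebra_sigma_sets) auto

lemma F_subset_G_infty: "0 \<le> t \<Longrightarrow> F t \<subseteq> G_infty M F \<tau>"
  unfolding G_infty_def F_infty_def by (auto intro: sigma_sets.Basic)

lemma tau_le_in_G_infty: "{\<omega>\<in>space M. \<tau> \<omega> \<le> s} \<in> G_infty M F \<tau>"
  unfolding G_infty_def by (auto intro: sigma_sets.Basic)

lemma sigma_algebra_prog_exp:
  assumes t: "0 \<le> t"
  shows "sigma_algebra (space M) (prog_exp M F \<tau> t)"
proof -
  interpret Ft: sigma_algebra "space M" "F t" by (rule sigma_algebra_H[OF t])
  interpret G: sigma_algebra "space M" "G_infty M F \<tau>" by (rule sigma_algebra_G_infty)
  let ?S = "{\<omega>\<in>space M. t < \<tau> \<omega>}"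
  show ?thesis unfolding sigma_algebra_iff2
  proof (intro conjI ballI allI impI)
    show "prog_exp M F \<tau> t \<subseteq> Pow (space M)"
      unfolding prog_exp_def using G.space_closed by auto
    show "{} \<in> prog_exp M F \<tau> t" unfolding prog_exp_def by auto
  next
    fix B assume "B \<in> prog_exp M F \<tau> t"
    then obtain Bt where B: "B \<in> G_infty M F \<tau>" "Bt \<in> F t" "B \<inter> ?S = Bt \<inter> ?S"
      unfolding prog_exp_def by blast
    then have "(space M - B) \<inter> ?S = (space M - Bt) \<inter> ?S" by blast
    then show "space M - B \<in> prog_exp M F \<tau> t" unfolding prog_exp_def using B by auto
  next
    fix A :: "nat \<Rightarrow> 'a set" assume "range A \<subseteq> prog_exp M F \<tau> t"
    then have "\<forall>i. \<exists>Bt. A i \<in> G_infty M F \<tau> \<and> Bt \<in> F t \<and> A i \<inter> ?S = Bt \<inter> ?S"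
      unfolding prog_exp_def by blast
    then obtain B where B: "\<And>i. A i \<in> G_infty M F \<tau>" "\<And>i. B i \<in> F t" "\<And>i. A i \<inter> ?S = B i \<inter> ?S"
      by metis
    have "(\<Union>i. A i) \<inter> ?S = (\<Union>i. B i) \<inter> ?S" using B(3) by blast
    moreover have "(\<Union>i. A i) \<in> G_infty M F \<tau>" "(\<Union>i. B i) \<in> F t" using B(1,2) by auto
    ultimately show "(\<Union>i. A i) \<in> prog_exp M F \<tau> t" unfolding prog_exp_def by blast
  qed
qed

lemma F_subset_prog_exp: "0 \<le> t \<Longrightarrow> F t \<subseteq> prog_exp M F \<tau> t"
  using F_subset_G_infty unfolding prog_exp_def by blast

lemma sigma_algebra_min_exp:
  assumes "0 \<le> t"
  shows "sigma_algebra (space M) (min_exp M F \<tau> t)"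
proof -
  have "F t \<subseteq> Pow (space M)" using sets_H[OF assms] sets.sets_into_space by blast
  then show ?thesis unfolding min_exp_def by (intro sigma_algebra_sigma_sets) auto
qed

lemma tau_le_in_min_exp: "q \<le> t \<Longrightarrow> {\<omega>\<in>space M. \<tau> \<omega> \<le> q} \<in> min_exp M F \<tau> t"
  unfolding min_exp_def by (rule sigma_sets.Basic) blast

lemma min_exp_subset_prog_exp:
  assumes t: "0 \<le> t"
  shows "min_exp M F \<tau> t \<subseteq> prog_exp M F \<tau> t"
  unfolding min_exp_def
proof (rule sigma_algebra.sigma_sets_subset[OF sigma_algebra_prog_exp[OF t]])
  have "{\<omega>\<in>space M. \<tau> \<omega> \<le> s} \<in> prog_exp M F \<tau> t" if "s \<le> t" for s
  proof -
    have "{\<omega>\<in>space M. \<tau> \<omega> \<le> s} \<inter> {\<omega>\<in>space M. t < \<tau> \<omega>} = {} \<inter> {\<omega>\<in>space M. t < \<tau> \<omega>}"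
      using that by auto
    then show ?thesis using tau_le_in_G_infty empty_in_H[OF t] unfolding prog_exp_def by blast
  qed
  then show "F t \<union> {{\<omega>\<in>space M. \<tau> \<omega> \<le> s} | s. s \<le> t} \<subseteq> prog_exp M F \<tau> t"
    using F_subset_prog_exp[OF t] by auto
qed

lemma prog_exp_mono:
  assumes "0 \<le> s" "s \<le> t"
  shows "prog_exp M F \<tau> s \<subseteq> prog_exp M F \<tau> t"
proof
  fix B assume "B \<in> prog_exp M F \<tau> s"
  then obtain Bs where B: "B \<in> G_infty M F \<tau>" "Bs \<in> F s"
      "B \<inter> {\<omega>\<in>space M. s < \<tau> \<omega>} = Bs \<inter> {\<omega>\<in>space M. s < \<tau> \<omega>}"
    unfolding prog_exp_def by blast
  moreover have "{\<omega>\<in>space M. t < \<tau> \<omega>} \<subseteq> {\<omega>\<in>space M. s < \<tau> \<omega>}" using assms by auto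
  ultimately have "B \<inter> {\<omega>\<in>space M. t < \<tau> \<omega>} = Bs \<inter> {\<omega>\<in>space M. t < \<tau> \<omega>}" by blast
  then show "B \<in> prog_exp M F \<tau> t" unfolding prog_exp_def using B H_mono[OF assms] by blast
qed

lemma filtration_on_prog_exp: "filtration_on M (prog_exp M F \<tau>)"
  unfolding filtration_on_def using sigma_algebra_prog_exp prog_exp_mono sets_G_infty
  by (auto simp: prog_exp_def)

lemma min_exp_mono: "0 \<le> s \<Longrightarrow> s \<le> t \<Longrightarrow> min_exp M F \<tau> s \<subseteq> min_exp M F \<tau> t"
  unfolding min_exp_def using H_mono by (intro sigma_sets_mono') auto

lemma filtration_on_min_exp: "filtration_on M (min_exp M F \<tau>)"
proof -
  have "min_exp M F \<tau> t \<subseteq> sets M" if "0 \<le> t" for t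
    using min_exp_subset_prog_exp[OF that] sets_G_infty by (auto simp: prog_exp_def)
  then show ?thesis unfolding filtration_on_def using sigma_algebra_min_exp min_exp_mono by simp
qed

sublocale G: filtered_prob_space M "prog_exp M F \<tau>"
  by unfold_locales (rule filtration_on_prog_exp)

sublocale G': filtered_prob_space M "min_exp M F \<tau>"
  by unfold_locales (rule filtration_on_min_exp)

definition N :: "real \<Rightarrow> 'a \<Rightarrow> real" where
  "N t \<omega> = indicator {\<omega>'. \<tau> \<omega>' \<le> t} \<omega>"

lemma N_eq: "N t \<omega> = (if \<tau> \<omega> \<le> t then 1 else 0)"
  by (simp add: N_def indicator_def)

lemma measurable_N [measurable]: "N t \<in> borel_measurable M"
  unfolding N_eq by measurable

lemma integrable_N: "integrable M (N t)"
  by (rule integrable_const_bound[where B=1]) (auto simp: N_eq)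

lemma integrable_increasing_N: "integrable_increasing M N"
  unfolding integrable_increasing_def
proof (intro conjI ballI allI impI)
  fix \<omega> assume w: "\<omega> \<in> space M"
  show "N 0 \<omega> = 0" using \<tau>_pos[OF w] by (simp add: N_eq)
  show "mono_on {0..} (\<lambda>t. N t \<omega>)" by (rule mono_onI) (auto simp: N_eq)
  fix t :: real
  have "\<forall>\<^sub>F s in at_right t. N s \<omega> = N t \<omega>"
  proof (cases "\<tau> \<omega> \<le> t")
    case True
    then show ?thesis by (auto simp: N_eq eventually_at_right_field intro!: exI[of _ "t + 1"])
  next
    case False
    then show ?thesis by (auto simp: N_eq eventually_at_right_field intro!: exI[of _ "\<tau> \<omega>"])
  qed
  then show "continuous (at_right t) (\<lambda>s. N s \<omega>)"
    unfolding continuous_within by (rule tendsto_eventually)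
qed (rule integrable_N)

lemma compensator_integrable_increasing:
  assumes "compensator M H \<tau> A"
  shows "integrable_increasing M A"
proof -
  have NA: "integrable M (\<lambda>\<omega>. N t \<omega> - A t \<omega>)" if "0 \<le> t" for t
    using assms that unfolding compensator_def martingale_def N_def by auto
  have "integrable M (A t)" if "0 \<le> t" for t
  proof -
    have "integrable M (\<lambda>\<omega>. N t \<omega> - (N t \<omega> - A t \<omega>))"
      using integrable_N[of t] NA[OF that] by (rule Bochner_Integration.integrable_diff)
    then show ?thesis by simp
  qed
  then show ?thesis using assms unfolding integrable_increasing_def compensator_def by auto
qed

lemma compensator_increments:
  assumes A: "compensator M H \<tau> A" and H: "\<And>s. 0 \<le> s \<Longrightarrow> H s \<subseteq> sets M"
    and st: "0 \<le> s" "s \<le> t" and B: "B \<in> H s"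
  shows "(\<integral>\<omega>. indicator B \<omega> * (A t \<omega> - A s \<omega>) \<partial>M) = (\<integral>\<omega>. indicator B \<omega> * (N t \<omega> - N s \<omega>) \<partial>M)"
proof -
  have mart: "(\<integral>\<omega>. indicator B \<omega> * (N t \<omega> - A t \<omega>) \<partial>M) = (\<integral>\<omega>. indicator B \<omega> * (N s \<omega> - A s \<omega>) \<partial>M)"
    using A st B unfolding compensator_def martingale_def set_lebesgue_integral_def N_def by auto
  have [measurable]: "B \<in> sets M" using H[OF st(1)] B by auto
  have iA: "integrable M (\<lambda>\<omega>. indicator B \<omega> * A r \<omega>)" if "0 \<le> r" for r
    using integrable_mult_indicator[OF _ integrable_increasingD(4)[OF compensator_integrable_increasing[OF A] that]]
    by simp
  have iN: "integrable M (\<lambda>\<omega>. indicator B \<omega> * N r \<omega>)" for r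
    using integrable_mult_indicator[OF _ integrable_N] by simp
  have split: "(\<integral>\<omega>. indicator B \<omega> * (f \<omega> - g \<omega>) \<partial>M) =
      (\<integral>\<omega>. indicator B \<omega> * f \<omega> \<partial>M) - (\<integral>\<omega>. indicator B \<omega> * g \<omega> \<partial>M)"
    if "integrable M (\<lambda>\<omega>. indicator B \<omega> * f \<omega>)" "integrable M (\<lambda>\<omega>. indicator B \<omega> * g \<omega>)" for f g :: "'a \<Rightarrow> real"
  proof -
    have "(\<lambda>\<omega>. indicator B \<omega> * (f \<omega> - g \<omega>)) = (\<lambda>\<omega>. indicator B \<omega> * f \<omega> - indicator B \<omega> * g \<omega>)"
      by (simp add: fun_eq_iff right_diff_distrib)
    then show ?thesis using Bochner_Integration.integral_diff[OF that] by simp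
  qed
  show ?thesis
    using mart st split[OF iA iA] split[OF iN iN] split[OF iN iA] by simp
qed

lemma strictly_after_tau_predictable:
  "{x \<in> space M \<times> {0..}. \<tau> (fst x) < snd x} \<in> sets (predictable_sigma M (min_exp M F \<tau>))"
proof -
  let ?R = "\<lambda>(q, r). {\<omega> \<in> space M. \<tau> \<omega> \<le> real_of_rat q} \<times> {real_of_rat q<..real_of_rat r}"
  let ?I = "{(q, r). 0 \<le> real_of_rat q \<and> q < r}"
  have "{x \<in> space M \<times> {0..}. \<tau> (fst x) < snd x} = (\<Union>p\<in>?I. ?R p)"
  proof (intro set_eqI iffI)
    fix x assume "x \<in> {x \<in> space M \<times> {0..}. \<tau> (fst x) < snd x}"
    then obtain \<omega> t where x: "x = (\<omega>, t)" "\<omega> \<in> space M" "\<tau> \<omega> < t" by auto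
    obtain q where q: "\<tau> \<omega> < real_of_rat q" "real_of_rat q < t" using of_rat_dense[OF x(3)] by blast
    obtain r where r: "t < real_of_rat r" using of_rat_dense[of t "t + 1"] by auto
    have q0: "0 \<le> real_of_rat q" using \<tau>_pos[OF x(2)] q by linarith
    have "real_of_rat q < real_of_rat r" using q r by linarith
    then have "q < r" by (simp add: of_rat_less)
    then show "x \<in> (\<Union>p\<in>?I. ?R p)" using x q r q0 by (intro UN_I[of "(q, r)"]) auto
  next
    fix x assume "x \<in> (\<Union>p\<in>?I. ?R p)"
    then obtain q r where "0 \<le> real_of_rat q" "x \<in> ?R (q, r)" by blast
    moreover from this(2) have "fst x \<in> space M" "\<tau> (fst x) \<le> real_of_rat q" "real_of_rat q < snd x"
      by (auto simp: mem_Times_iff)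
    ultimately have "fst x \<in> space M" "0 \<le> snd x" "\<tau> (fst x) < snd x" by linarith+
    then show "x \<in> {x \<in> space M \<times> {0..}. \<tau> (fst x) < snd x}" by (simp add: mem_Times_iff)
  qed
  also have "\<dots> \<in> sets (predictable_sigma M (min_exp M F \<tau>))"
    using tau_le_in_min_exp
    by (intro sets.countable_UN) (auto intro!: G'.predictable_rectangle_sets predictable_rectangleI simp: of_rat_less)
  finally show ?thesis .
qed

lemma emeasure_doleans_N_strictly_after_tau:
  assumes T: "0 < T"
  shows "emeasure (doleans M (min_exp M F \<tau>) N T) {x \<in> space M \<times> {0..}. \<tau> (fst x) < snd x} = 0"
proof -
  let ?C = "{x \<in> space M \<times> {0..}. \<tau> (fst x) < snd x}"
  have "subgraph M N T \<inter> (time_change N T -` ?C \<inter> space (M \<Otimes>\<^sub>M lborel)) = {}"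
  proof (intro equals0I)
    fix x assume "x \<in> subgraph M N T \<inter> (time_change N T -` ?C \<inter> space (M \<Otimes>\<^sub>M lborel))"
    then have x: "x \<in> subgraph M N T" and after: "\<tau> (fst x) < snd (time_change N T x)"
      by (simp_all add: time_change_def)
    have w: "fst x \<in> space M" and u: "snd x \<le> N T (fst x)"
      using x by (auto simp: subgraph_def space_pair_measure)
    have "snd x \<le> N (\<tau> (fst x)) (fst x)" using u by (simp add: N_eq split: if_splits)
    then have "hitting_time (\<lambda>s. N s (fst x)) T (snd x) \<le> \<tau> (fst x)"
      using integrable_increasing_hitting_time_le_iff[OF integrable_increasing_N w less_imp_le[OF T]]
        \<tau>_pos[OF w] by simp
    then show False using after by (simp add: time_change_def)
  qed
  then show ?thesis
    by (simp add: G'.emeasure_doleans[OF integrable_increasing_N T strictly_after_tau_predictable])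
qed

lemma min_exp_compensator_constant_after_tau:
  assumes A: "compensator M (min_exp M F \<tau>) \<tau> A" and st: "0 \<le> s" "s < t"
  shows "AE \<omega> in M. \<tau> \<omega> \<le> s \<longrightarrow> A t \<omega> = A s \<omega>"
proof -
  let ?C = "{x \<in> space M \<times> {0..}. \<tau> (fst x) < snd x}"
  define P where "P = {\<omega>\<in>space M. \<tau> \<omega> \<le> s}"
  have X: "integrable_increasing M A" by (rule compensator_integrable_increasing[OF A])
  have T: "0 < t" using st by simp
  have [measurable]: "P \<in> sets M" "A s \<in> borel_measurable M" "A t \<in> borel_measurable M"
    unfolding P_def using integrable_increasingD(5)[OF X] st by auto
  have incr: "A s \<omega> \<le> A t \<omega>" if "\<omega> \<in> space M" for \<omega>
    using integrable_increasing_mono[OF X that st(1)] st by simp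
  let ?band = "{x \<in> space (M \<Otimes>\<^sub>M lborel). fst x \<in> P \<and> A s (fst x) < snd x \<and> snd x \<le> A t (fst x)}"
  have "?band \<subseteq> subgraph M A t \<inter> (time_change A t -` ?C \<inter> space (M \<Otimes>\<^sub>M lborel))"
  proof
    fix x assume x: "x \<in> ?band"
    have w: "fst x \<in> space M" using x by (auto simp: space_pair_measure)
    have "\<not> hitting_time (\<lambda>r. A r (fst x)) t (snd x) \<le> s"
      using integrable_increasing_hitting_time_le_iff[OF X w less_imp_le[OF T], of "snd x" s] x st by auto
    moreover have "0 \<le> A s (fst x)" by (rule integrable_increasing_nonneg[OF X w st(1)])
    ultimately show "x \<in> subgraph M A t \<inter> (time_change A t -` ?C \<inter> space (M \<Otimes>\<^sub>M lborel))"
      using x w st by (auto simp: subgraph_def time_change_def P_def)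
  qed
  then have "emeasure (M \<Otimes>\<^sub>M lborel) ?band \<le> emeasure (doleans M (min_exp M F \<tau>) A t) ?C"
    using G'.emeasure_doleans[OF X T strictly_after_tau_predictable] subgraph_sets[OF X] T
      measurable_sets[OF G'.time_change_measurable[OF X T] strictly_after_tau_predictable]
    by (auto intro!: emeasure_mono)
  also have "doleans M (min_exp M F \<tau>) A t = doleans M (min_exp M F \<tau>) N t"
    using compensator_increments[OF A G'.sets_H]
    by (intro G'.doleans_eqI[OF X integrable_increasing_N T])
  finally have "(\<integral>\<^sup>+\<omega>. indicator P \<omega> * ennreal (A t \<omega> - A s \<omega>) \<partial>M) = 0"
    using emeasure_doleans_N_strictly_after_tau[OF T] emeasure_pair_lborel_between[of "A s" M "A t" P] incr
    by simp
  then have "AE \<omega> in M. indicator P \<omega> * ennreal (A t \<omega> - A s \<omega>) = 0"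
    by (subst (asm) nn_integral_0_iff_AE) auto
  then show ?thesis
  proof (rule AE_mp[OF _ AE_I2], intro impI)
    fix \<omega> assume w: "\<omega> \<in> space M" and "indicator P \<omega> * ennreal (A t \<omega> - A s \<omega>) = 0" "\<tau> \<omega> \<le> s"
    then show "A t \<omega> = A s \<omega>" using incr[OF w] by (auto simp: P_def ennreal_eq_0_iff)
  qed
qed

lemma min_exp_compensator_increments_prog_exp:
  assumes A: "compensator M (min_exp M F \<tau>) \<tau> A" and st: "0 \<le> s" "s \<le> t"
    and B: "B \<in> prog_exp M F \<tau> s"
  shows "(\<integral>\<omega>. indicator B \<omega> * (A t \<omega> - A s \<omega>) \<partial>M) = (\<integral>\<omega>. indicator B \<omega> * (N t \<omega> - N s \<omega>) \<partial>M)"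
proof -
  let ?S = "{\<omega>\<in>space M. s < \<tau> \<omega>}"
  obtain Bs where Bs: "Bs \<in> F s" "B \<inter> ?S = Bs \<inter> ?S" using B unfolding prog_exp_def by blast
  define B' where "B' = Bs \<inter> ?S"
  have B': "B' \<in> min_exp M F \<tau> s"
  proof -
    interpret sigma_algebra "space M" "min_exp M F \<tau> s" by (rule sigma_algebra_min_exp[OF st(1)])
    have "Bs \<in> min_exp M F \<tau> s" unfolding min_exp_def using Bs(1) by (auto intro: sigma_sets.Basic)
    moreover have "?S = space M - {\<omega>\<in>space M. \<tau> \<omega> \<le> s}" by auto
    ultimately show ?thesis unfolding B'_def using tau_le_in_min_exp[of s s] by auto
  qed
  have X: "integrable_increasing M A" by (rule compensator_integrable_increasing[OF A])
  have [measurable]: "B \<in> sets M" "B' \<in> sets M" "A s \<in> borel_measurable M" "A t \<in> borel_measurable M"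
    using G.sets_H[OF st(1)] B G'.sets_H[OF st(1)] B' integrable_increasingD(5)[OF X] st by auto
  have agree: "indicator B \<omega> = (indicator B' \<omega> :: real)" if "\<omega> \<in> space M" "s < \<tau> \<omega>" for \<omega>
    using Bs(2) that unfolding B'_def by (auto simp: indicator_def)
  have "AE \<omega> in M. \<tau> \<omega> \<le> s \<longrightarrow> A t \<omega> = A s \<omega>"
    using min_exp_compensator_constant_after_tau[OF A st(1)] st by (cases "s = t") auto
  then have "AE \<omega> in M. indicator B \<omega> * (A t \<omega> - A s \<omega>) = indicator B' \<omega> * (A t \<omega> - A s \<omega>)"
    by (rule AE_mp[OF _ AE_I2]) (use agree in \<open>auto simp: B'_def\<close>)
  then have "(\<integral>\<omega>. indicator B \<omega> * (A t \<omega> - A s \<omega>) \<partial>M) = (\<integral>\<omega>. indicator B' \<omega> * (A t \<omega> - A s \<omega>) \<partial>M)"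
    by (intro integral_cong_AE) auto
  also have "\<dots> = (\<integral>\<omega>. indicator B' \<omega> * (N t \<omega> - N s \<omega>) \<partial>M)"
    by (rule compensator_increments[OF A G'.sets_H st B'])
  also have "\<dots> = (\<integral>\<omega>. indicator B \<omega> * (N t \<omega> - N s \<omega>) \<partial>M)"
    using agree st by (intro Bochner_Integration.integral_cong) (auto simp: N_eq B'_def)
  finally show ?thesis .
qed

end

theorem corollary1p1:
  fixes M :: "'a measure" and F :: "real \<Rightarrow> 'a set set" and \<tau> :: "'a \<Rightarrow> real"
    and A A' :: "real \<Rightarrow> 'a \<Rightarrow> real"
  assumes "prob_space M" and "complete_measure M"
    and "filtration_on M F" and "usual_hypotheses M F"
    and "\<tau> \<in> borel_measurable M" and "\<forall>\<omega>\<in>space M. 0 < \<tau> \<omega>"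
    and "compensator M (prog_exp M F \<tau>) \<tau> A"
    and "compensator M (min_exp M F \<tau>) \<tau> A'"
  shows "AE \<omega> in M. \<forall>t\<ge>0. A t \<omega> = A' t \<omega>"
proof -
  interpret random_time M F \<tau>
    by (intro random_time.intro filtered_prob_space.intro filtered_prob_space_axioms.intro
        random_time_axioms.intro) (use assms in auto)
  note A = assms(7) and A' = assms(8)
  have "predictable M (prog_exp M F \<tau>) A" "predictable M (min_exp M F \<tau>) A'"
    using A A' unfolding compensator_def by blast+
  then have predictable: "predictable M (prog_exp M F \<tau>) A" "predictable M (prog_exp M F \<tau>) A'"
    using min_exp_subset_prog_exp by (auto intro: predictable_mono)
  show ?thesis
  proof (rule G.predictable_integrable_increasing_AE_eq[OF compensator_integrable_increasing[OF A]
        compensator_integrable_increasing[OF A'] predictable])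
    fix s t B assume "0 \<le> s" "s \<le> t" "B \<in> prog_exp M F \<tau> s"
    then show "(\<integral>\<omega>. indicator B \<omega> * (A t \<omega> - A s \<omega>) \<partial>M) = (\<integral>\<omega>. indicator B \<omega> * (A' t \<omega> - A' s \<omega>) \<partial>M)"
      using compensator_increments[OF A G.sets_H] min_exp_compensator_increments_prog_exp[OF A'] by simp
  qed
qed

end
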